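(* Each homotopy slalom curve is the composition of elementary homotopy slalom curves.
   Context: All curves lie in $\mathbb{C}\setminus i\mathbb{Z}$. An elementary slalom curve is a simple curve with endpoints on different connected components of $i\mathbb{R}\setminus i\mathbb{Z}$ whose interior is contained in one of the open half-planes $\{\mathrm{Re}\,z>0\}$ or $\{\mathrm{Re}\,z<0\}$. A slalom curve is a curve which can be divided into finitely many elementary slalom curves such that consecutive ones are contained in different half-planes. A curve homotopic to a slalom curve (resp. elementary slalom curve) in $\mathbb{C}\setminus i\mathbb{Z}$ through curves with endpoints in $i\mathbb{R}\setminus i\mathbb{Z}$ is a homotopy slalom curve (resp. elementary homotopy slalom curve). Composition means concatenation of curves. *)

theory Defs
  imports "HOL-Analysis.Analysis"
begin

definition iZ :: "complex set" where
  "iZ = {z. Re z = 0 \<and> Im z \<in> \<int>}"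

definition iRZ :: "complex set" where
  "iRZ = {z. Re z = 0 \<and> Im z \<notin> \<int>}"

definition Dom :: "complex set" where
  "Dom = - iZ"

definition elem_slalom_side :: "bool \<Rightarrow> (real \<Rightarrow> complex) \<Rightarrow> bool" where
  "elem_slalom_side r g \<longleftrightarrow>
     simple_path g \<and> path_image g \<subseteq> Dom \<and>
     pathstart g \<in> iRZ \<and> pathfinish g \<in> iRZ \<and>
     \<not> connected_component iRZ (pathstart g) (pathfinish g) \<and>
     (\<forall>t\<in>{0<..<1}. if r then Re (g t) > 0 else Re (g t) < 0)"

definition elem_slalom :: "(real \<Rightarrow> complex) \<Rightarrow> bool" where
  "elem_slalom g \<longleftrightarrow> (\<exists>r. elem_slalom_side r g)"

definition slalom :: "(real \<Rightarrow> complex) \<Rightarrow> bool" where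
  "slalom g \<longleftrightarrow> path g \<and> path_image g \<subseteq> Dom \<and>
     (\<exists>n t r. n \<ge> 1 \<and> t 0 = 0 \<and> t n = 1 \<and>
        (\<forall>i<n. t i < t (Suc i)) \<and>
        (\<forall>i<n. elem_slalom_side (r i) (subpath (t i) (t (Suc i)) g)) \<and>
        (\<forall>i. Suc i < n \<longrightarrow> r i \<noteq> r (Suc i)))"

definition slalom_homotopic :: "(real \<Rightarrow> complex) \<Rightarrow> (real \<Rightarrow> complex) \<Rightarrow> bool" where
  "slalom_homotopic g f \<longleftrightarrow>
     homotopic_with_canon (\<lambda>h. h 0 \<in> iRZ \<and> h 1 \<in> iRZ) {0..1} Dom g f"

definition homotopy_slalom :: "(real \<Rightarrow> complex) \<Rightarrow> bool" where
  "homotopy_slalom g \<longleftrightarrow> (\<exists>f. slalom f \<and> slalom_homotopic g f)"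

definition homotopy_elem_slalom :: "(real \<Rightarrow> complex) \<Rightarrow> bool" where
  "homotopy_elem_slalom g \<longleftrightarrow> (\<exists>f. elem_slalom f \<and> slalom_homotopic g f)"

end

(*
  Cover C - iZ by the open half-planes Re z < 0, Re z > 0 and the gaps i(k, k+1) of the imaginary
  axis. A curve then induces a walk in the graph of these regions, in which each half-plane is
  adjacent to each gap, and cancelling backtracks turns it into a reduced walk. The reduced walk
  is a homotopy invariant: subdividing a homotopy so finely that every small square of the grid
  lies in a convex subset of C - iZ, one row of the grid passes to the next by changes inside
  stars {left, right, gap k}, which are trees. The reduced walk of a slalom curve is
  gap a0, side s0, gap a1, ..., gap an with consecutive gaps distinct, so the same holds for every
  curve g homotopic to it. Cutting g where the reduction of its walk first reaches gap a1, gap a2,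
  ... gives pieces with reduced walks gap ai, side si, gap a(i+1). Cancelling the backtracks of
  such a piece by homotopies inside half-planes leaves a polygon in the closed half-plane si,
  which is homotopic there to an elementary slalom arc.
*)
theory Submission
  imports Defs
begin

section \<open>Reduced walks in the region graph\<close>

datatype region = Lhp | Rhp | Gap int

text \<open>Walks are kept reversed, current region first.\<close>

fun push_reduce :: "region list \<Rightarrow> region \<Rightarrow> region list" where
  "push_reduce [] x = [x]"
| "push_reduce [y] x = (if x = y then [y] else [x, y])"
| "push_reduce (y # z # S) x
  = (if x = y then y # z # S else if x = z then z # S else x # y # z # S)"

definition adjacent :: "region \<Rightarrow> region \<Rightarrow> bool" where
  "adjacent x y \<longleftrightarrow> x = y
    \<or> (\<exists>k. (x = Gap k \<and> (y = Lhp \<or> y = Rhp)) \<or> (y = Gap k \<and> (x = Lhp \<or> x = Rhp)))"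

lemma push_reduce_ne: "push_reduce S x \<noteq> []"
  by (cases "(S,x)" rule: push_reduce.cases) auto

lemma hd_push_reduce: "hd (push_reduce S x) = x"
  by (cases "(S,x)" rule: push_reduce.cases) auto

fun reduced_walk :: "region list \<Rightarrow> bool" where
  "reduced_walk (a # b # c # r) = (a \<noteq> b \<and> a \<noteq> c \<and> reduced_walk (b # c # r))"
| "reduced_walk [a, b] = (a \<noteq> b)"
| "reduced_walk _ = True"

lemma reduced_walk_push_reduce: "reduced_walk S \<Longrightarrow> reduced_walk (push_reduce S x)"
  by (cases "(S,x)" rule: push_reduce.cases) (auto elim: reduced_walk.elims)

lemma reduced_walk_foldl: "reduced_walk S \<Longrightarrow> reduced_walk (foldl push_reduce S w)"
  by (induction w arbitrary: S) (auto simp: reduced_walk_push_reduce)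

lemma foldl_push_reduce_ne: "S \<noteq> [] \<Longrightarrow> foldl push_reduce S w \<noteq> []"
  by (induction w arbitrary: S) (auto simp: push_reduce_ne)

lemma hd_foldl_push_reduce: "w \<noteq> [] \<Longrightarrow> hd (foldl push_reduce S w) = last w"
  by (induction w arbitrary: S rule: rev_induct) (auto simp: hd_push_reduce)

text \<open>In the star \<open>{Lhp, Rhp, Gap k}\<close>, which is a tree, a reduced walk is determined by
  its endpoints: it is \<open>star_path k a b\<close> appended to the walk so far.\<close>

fun star_path :: "int \<Rightarrow> region \<Rightarrow> region \<Rightarrow> region list" where
  "star_path k a b = (if a = b then [] else if a = Gap k \<or> b = Gap k then [b] else [Gap k, b])"

lemma push_reduce_star_path:
  assumes "S \<noteq> []" "reduced_walk S" "hd S \<in> {Lhp, Rhp, Gap k}" "y \<in> {Lhp, Rhp, Gap k}"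
    "x \<in> {Lhp, Rhp, Gap k}" "adjacent y x"
  shows "push_reduce (foldl push_reduce S (star_path k (hd S) y)) x
    = foldl push_reduce S (star_path k (hd S) x)"
proof -
  obtain t S' where S: "S = t # S'" using assms(1) by (cases S) auto
  show ?thesis
    using assms(2-6) unfolding S
    by (cases S' rule: reduced_walk.cases; auto simp: adjacent_def split: if_splits)
qed

lemma foldl_push_reduce_star:
  assumes "S \<noteq> []" "reduced_walk S" "hd S \<in> {Lhp, Rhp, Gap k}" "set w \<subseteq> {Lhp, Rhp, Gap k}"
    "successively adjacent (hd S # w)" "w \<noteq> []"
  shows "foldl push_reduce S w = foldl push_reduce S (star_path k (hd S) (last w))"
  using assms(4-6)
proof (induction w rule: rev_induct)
  case Nil then show ?case by simp
next
  case (snoc x w)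
  show ?case
  proof (cases "w = []")
    case True
    then show ?thesis using snoc push_reduce_star_path[OF assms(1,2,3), of "hd S" x] assms
      by (auto simp: adjacent_def)
  next
    case False
    have "successively adjacent (hd S # w)" using snoc(3)
      by (metis append_Cons successively_append_iff)
    then have IH: "foldl push_reduce S w = foldl push_reduce S (star_path k (hd S) (last w))"
      using snoc False by auto
    have "adjacent (last w) x" using snoc(3) False
      by (metis append_Cons last_ConsR list.distinct(1) successively_append_iff hd_Cons_tl
        last_in_set list.sel(1) successively_Cons)
    have "last w \<in> set w" using False by simp
    then have "last w \<in> {Lhp, Rhp, Gap k}" "x \<in> {Lhp, Rhp, Gap k}" using snoc(2) by auto
    then have "push_reduce (foldl push_reduce S w) x = foldl push_reduce S (star_path k (hd S) x)"
      using IH push_reduce_star_path[OF assms(1,2,3), of "last w" x] \<open>adjacent (last w) x\<close> by simp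
    then show ?thesis by simp
  qed
qed

lemma push_reduce_hd: "S \<noteq> [] \<Longrightarrow> hd S = x \<Longrightarrow> push_reduce S x = S"
  by (cases "(S,x)" rule: push_reduce.cases) auto

lemma foldl_push_reduce_star_cong:
  assumes "S \<noteq> []" "reduced_walk S" "hd S \<in> {Lhp, Rhp, Gap k}"
    "set w1 \<subseteq> {Lhp, Rhp, Gap k}" "successively adjacent (hd S # w1)" "w1 \<noteq> []"
    "set w2 \<subseteq> {Lhp, Rhp, Gap k}" "successively adjacent (hd S # w2)" "w2 \<noteq> []"
    "last w1 = last w2"
  shows "foldl push_reduce S w1 = foldl push_reduce S w2"
  using foldl_push_reduce_star[OF assms(1-6)] foldl_push_reduce_star[OF assms(1-3) assms(7-9)]
    assms(10) by simp

lemma foldl_push_reduce_split: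
  assumes "foldl push_reduce S0 w = P @ S" "P \<noteq> []" "S \<noteq> []" "S0 \<noteq> []" "length S0 \<le> length S"
  shows "\<exists>w1 w2. w = w1 @ w2 \<and> foldl push_reduce S0 w1 = S \<and> w2 \<noteq> [] \<and> foldl push_reduce [hd S] w2
    = P @ [hd S]"
  using assms(1,2)
proof (induction w arbitrary: P rule: rev_induct)
  case Nil
  then have "S0 = P @ S" by simp
  then have "length S0 = length P + length S" by simp
  then show ?case using assms(5) Nil(2) by simp
next
  case (snoc x w)
  define U where "U = foldl push_reduce S0 w"
  have U: "push_reduce U x = P @ S" using snoc(2) by (simp add: U_def)
  have Une: "U \<noteq> []" using assms(4) by (simp add: U_def foldl_push_reduce_ne)
  obtain S1 S' where S: "S = S1 # S'" using assms(3) by (cases S) auto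
  show ?case
  proof (cases "x = hd U")
    case True
    then have "U = P @ S" using U Une push_reduce_hd by metis
    from snoc(1)[OF this[unfolded U_def] snoc(3)] obtain w1 w2 where
      w: "w = w1 @ w2" "foldl push_reduce S0 w1 = S" "w2 \<noteq> []"
        "foldl push_reduce [hd S] w2 = P @ [hd S]" by blast
    have "push_reduce (P @ [hd S]) x = P @ [hd S]"
      using True \<open>U = P @ S\<close> snoc(3) by (intro push_reduce_hd) auto
    then show ?thesis using w by (intro exI[of _ w1] exI[of _ "w2 @ [x]"]) auto
  next
    case False
    obtain u U' where Uu: "U = u # U'" using Une by (cases U) auto
    show ?thesis
    proof (cases "U' \<noteq> [] \<and> x = hd U'")
      case True
      then obtain u2 U'' where U': "U' = u2 # U''" by (cases U') auto
      have "push_reduce U x = U'" using True False Uu U' by auto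
      then have "U = (u # P) @ S" using U Uu by simp
      from snoc(1)[OF this[unfolded U_def]] obtain w1 w2 where
        w: "w = w1 @ w2" "foldl push_reduce S0 w1 = S" "w2 \<noteq> []"
          "foldl push_reduce [hd S] w2 = (u # P) @ [hd S]" by blast
      have "push_reduce ((u # P) @ [hd S]) x = P @ [hd S]"
        using True U' \<open>push_reduce U x = U'\<close> U Uu snoc(3) False by (cases P) auto
      then show ?thesis using w by (intro exI[of _ w1] exI[of _ "w2 @ [x]"]) auto
    next
      case False2: False
      have push: "push_reduce U x = x # U" using False False2 Uu
        by (cases U'; auto)
      then have xU: "x # U = P @ S" using U by simp
      show ?thesis
      proof (cases "U = S")
        case True
        then have "P = [x]" using xU by simp
        have "push_reduce [hd S] x = [x, hd S]" using False True by auto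
        then show ?thesis using True \<open>P = [x]\<close>
          by (intro exI[of _ w] exI[of _ "[x]"]) (auto simp: U_def)
      next
        case UneS: False
        obtain P' where P: "P = x # P'" "U = P' @ S" using xU snoc(3) by (cases P) auto
        have "P' \<noteq> []" using UneS P by auto
        from snoc(1)[OF P(2)[unfolded U_def] this] obtain w1 w2 where
          w: "w = w1 @ w2" "foldl push_reduce S0 w1 = S" "w2 \<noteq> []"
            "foldl push_reduce [hd S] w2 = P' @ [hd S]" by blast
        have "push_reduce (P' @ [hd S]) x = x # P' @ [hd S]"
          using False False2 Uu P \<open>P' \<noteq> []\<close> S
          by (cases P' rule: reduced_walk.cases) (auto split: if_splits)
        then show ?thesis using w P by (intro exI[of _ w1] exI[of _ "w2 @ [x]"]) auto
      qed
    qed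
  qed
qed

definition has_backtrack :: "region list \<Rightarrow> bool" where
  "has_backtrack xs \<longleftrightarrow> (\<exists>u x y m v. xs = u @ [x] @ replicate (Suc m) y @ [x] @ v \<and> x \<noteq> y)"

lemma remdups_adj_eq_Cons_Cons:
  "remdups_adj X = y # z # r \<Longrightarrow> \<exists>m X'. X = replicate (Suc m) y @ z # X'"
proof (induction X arbitrary: y rule: remdups_adj.induct)
  case 1 then show ?case by simp
next
  case (2 x) then show ?case by simp
next
  case (3 x1 x2 xs)
  show ?case
  proof (cases "x1 = x2")
    case True
    then obtain m X' where "x1 # xs = replicate (Suc m) y @ z # X'" using 3 by auto
    then show ?thesis using True
      by (intro exI[of _ "Suc m"] exI[of _ X']) auto
  next
    case False
    then have "y = x1" "remdups_adj (x2 # xs) = z # r" using 3(3) by auto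
    then have "x2 = z" by (metis hd_remdups_adj list.sel(1))
    then show ?thesis using \<open>y = x1\<close> by (intro exI[of _ 0] exI[of _ xs]) auto
  qed
qed

lemma foldl_push_reduce_no_backtrack:
  assumes "\<not> has_backtrack (s # w)"
  shows "foldl push_reduce [s] w = remdups_adj (rev (s # w))"
  using assms
proof (induction w rule: rev_induct)
  case Nil then show ?case by simp
next
  case (snoc z w)
  have "\<not> has_backtrack (s # w)" using snoc(2) unfolding has_backtrack_def
    by (metis append.assoc append_Cons)
  then have U: "foldl push_reduce [s] w = remdups_adj (rev (s # w))" using snoc(1) by simp
  obtain y r where yr: "remdups_adj (rev (s # w)) = y # r"
    by (cases "remdups_adj (rev (s # w))") auto
  have "push_reduce (y # r) z = (if z = y then y # r else z # y # r)"
  proof (cases r)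
    case (Cons z' r')
    have "z \<noteq> z' \<or> z = y"
    proof (rule ccontr)
      assume "\<not> (z \<noteq> z' \<or> z = y)"
      then have zz: "z = z'" "z \<noteq> y" by auto
      obtain m X' where X: "rev (s # w) = replicate (Suc m) y @ z' # X'"
        using remdups_adj_eq_Cons_Cons[of "rev (s # w)" y z' r'] yr Cons by auto
      have "s # w = rev X' @ [z'] @ replicate (Suc m) y"
        using arg_cong[OF X, of rev] by (simp add: replicate_append_same)
      then have "has_backtrack (s # w @ [z])" unfolding has_backtrack_def using zz
        by (intro exI[of _ "rev X'"] exI[of _ z'] exI[of _ y] exI[of _ m] exI[of _ "[]"]) simp
      then show False using snoc(2) by simp
    qed
    then show ?thesis using Cons by auto
  qed simp
  then show ?case using U yr by (simp add: remdups_adj_Cons)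
qed

lemma has_backtrack_or_subset:
  assumes "foldl push_reduce [s] w = T"
  shows "has_backtrack (s # w) \<or> set (s # w) \<subseteq> set T"
  using foldl_push_reduce_no_backtrack[of s w] assms by auto

lemma foldl_push_reduce_excursion:
  assumes "reduced_walk T" "T \<noteq> []" "hd T = x" "y \<noteq> x"
  shows "foldl push_reduce T (replicate (Suc m) y @ [x]) = T"
proof -
  obtain T' where T: "T = x # T'" using assms by (cases T) auto
  have push_y: "push_reduce T y = (if T' \<noteq> [] \<and> hd T' = y then T' else y # T)"
    using assms T by (cases T'; auto)
  have rep: "foldl push_reduce (y # R) (replicate m y) = y # R" for R
    by (induction m) (simp_all add: push_reduce_hd)
  show ?thesis
  proof (cases "T' \<noteq> [] \<and> hd T' = y")
    case True
    then obtain T'' where T': "T' = y # T''" by (cases T') auto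
    have "T'' = [] \<or> hd T'' \<noteq> x" using assms(1) T T' by (cases T'') auto
    then have "push_reduce (y # T'') x = x # y # T''" using assms(4) by (cases T'') auto
    then show ?thesis using push_y True T T' rep[of T''] by simp
  next
    case False
    have "push_reduce (y # x # T') x = x # T'" using assms(4) by simp
    then show ?thesis using push_y False T rep[of "x # T'"] by simp
  qed
qed

lemma foldl_push_reduce_remove_excursion:
  assumes "y \<noteq> x"
  shows "foldl push_reduce [] (u @ [x] @ replicate (Suc m) y @ [x] @ v)
    = foldl push_reduce [] (u @ [x, x] @ v)"
proof -
  define T where "T = foldl push_reduce [] (u @ [x])"
  have T: "reduced_walk T" "T \<noteq> []" "hd T = x"
    unfolding T_def using reduced_walk_foldl[of "[]" "u @ [x]"]
      by (auto simp: push_reduce_ne hd_push_reduce)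
  have "foldl push_reduce [] (u @ [x] @ replicate (Suc m) y @ [x] @ v)
    = foldl push_reduce (foldl push_reduce T (replicate (Suc m) y @ [x])) v"
    by (simp add: T_def del: replicate.simps)
  also have "\<dots> = foldl push_reduce T v" using foldl_push_reduce_excursion[OF T assms] by simp
  also have "\<dots> = foldl push_reduce [] (u @ [x, x] @ v)"
    using T by (simp add: T_def push_reduce_hd)
  finally show ?thesis .
qed

lemma last_push_reduce: "S \<noteq> [] \<Longrightarrow> last (push_reduce S x) = last S"
  by (cases "(S,x)" rule: push_reduce.cases) auto

lemma last_foldl_push_reduce: "S \<noteq> [] \<Longrightarrow> last (foldl push_reduce S w) = last S"
  by (induction w arbitrary: S) (auto simp: last_push_reduce push_reduce_ne)

section \<open>The regions of the domain\<close>

text \<open>\<open>Gap k\<close> is the segment \<open>i(k, k + 1)\<close> of the axis; points of \<open>iZ\<close> get a junk value.\<close>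

definition region_of :: "complex \<Rightarrow> region" where
  "region_of z = (if Re z < 0 then Lhp else if Re z > 0 then Rhp else Gap \<lfloor>Im z\<rfloor>)"

lemma in_Dom_iff: "z \<in> Dom \<longleftrightarrow> \<not> (Re z = 0 \<and> Im z \<in> \<int>)"
  by (auto simp: Dom_def iZ_def)

lemma region_of_eq_Gap: "region_of z = Gap k \<longleftrightarrow> Re z = 0 \<and> \<lfloor>Im z\<rfloor> = k"
  by (auto simp: region_of_def)
lemma region_of_eq_Lhp: "region_of z = Lhp \<longleftrightarrow> Re z < 0"
  by (auto simp: region_of_def)
lemma region_of_eq_Rhp: "region_of z = Rhp \<longleftrightarrow> Re z > 0"
  by (auto simp: region_of_def)

lemma floor_less_not_Ints: "x \<notin> \<int> \<Longrightarrow> of_int \<lfloor>x\<rfloor> < x"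
  by (metis Ints_of_int floor_correct order_le_less)

lemma in_Dom_region_of_Gap_iff:
  "z \<in> Dom \<and> region_of z = Gap k \<longleftrightarrow> Re z = 0 \<and> of_int k < Im z \<and> Im z < of_int k + 1"
proof
  assume "z \<in> Dom \<and> region_of z = Gap k"
  then have "Re z = 0" "\<lfloor>Im z\<rfloor> = k" "Im z \<notin> \<int>" by (auto simp: region_of_eq_Gap in_Dom_iff)
  then show "Re z = 0 \<and> of_int k < Im z \<and> Im z < of_int k + 1"
    using floor_less_not_Ints[of "Im z"] real_of_int_floor_add_one_gt[of "Im z"] by simp
next
  assume z: "Re z = 0 \<and> of_int k < Im z \<and> Im z < of_int k + 1"
  have "Im z \<notin> \<int>"
  proof
    assume "Im z \<in> \<int>"
    then obtain m where "Im z = of_int m" by (auto elim: Ints_cases)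
    then have "of_int k < (of_int m :: real)" "(of_int m :: real) < of_int (k + 1)" using z
      by simp_all
    then show False unfolding of_int_less_iff by linarith
  qed
  moreover have "\<lfloor>Im z\<rfloor> = k" using z by (simp add: floor_eq_iff)
  ultimately show "z \<in> Dom \<and> region_of z = Gap k" using z by (simp add: region_of_eq_Gap in_Dom_iff)
qed

lemma convex_region: "convex {z \<in> Dom. region_of z = X}"
proof (cases X)
  case Lhp
  then have "{z \<in> Dom. region_of z = X} = {z. Re z < 0}" by (auto simp: region_of_eq_Lhp in_Dom_iff)
  then show ?thesis using convex_halfspace_Re_lt by simp
next
  case Rhp
  then have "{z \<in> Dom. region_of z = X} = {z. Re z > 0}" by (auto simp: region_of_eq_Rhp in_Dom_iff)
  then show ?thesis using convex_halfspace_Re_gt by simp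
next
  case (Gap k)
  have "{z \<in> Dom. region_of z = X} =
      {z. Re z \<le> 0} \<inter> {z. Re z \<ge> 0} \<inter> {z. Im z > of_int k} \<inter> {z. Im z < of_int k + 1}"
    unfolding Gap set_eq_iff mem_Collect_eq Int_iff in_Dom_region_of_Gap_iff by auto
  then show ?thesis
    by (simp add: convex_Int convex_halfspace_Re_le convex_halfspace_Re_ge convex_halfspace_Im_gt
      convex_halfspace_Im_lt)
qed

lemma closed_segment_subset_Dom:
  assumes "z \<in> Dom" "w \<in> Dom" "adjacent (region_of z) (region_of w)"
  shows "closed_segment z w \<subseteq> Dom"
proof (cases "region_of z = region_of w")
  case True
  then have "closed_segment z w \<subseteq> {p \<in> Dom. region_of p = region_of z}"
    using assms(1,2) convex_region by (intro closed_segment_subset) auto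
  then show ?thesis by blast
next
  case False
  then have axis: "(Re z = 0) \<noteq> (Re w = 0)"
    using assms(3) by (auto simp: adjacent_def region_of_def split: if_splits)
  have "Re p \<noteq> 0" if p: "p \<in> open_segment z w" for p
  proof -
    obtain u where "0 < u" "u < 1" "p = (1 - u) *\<^sub>R z + u *\<^sub>R w"
      using p unfolding in_segment(2) by blast
    then show ?thesis using axis by auto
  qed
  then show ?thesis using assms(1,2) by (auto simp: in_Dom_iff closed_segment_eq_open)
qed

definition left_Dom :: "complex set" where "left_Dom = {z. Re z \<le> 0} \<inter> Dom"
definition right_Dom :: "complex set" where "right_Dom = {z. Re z \<ge> 0} \<inter> Dom"

lemma closed_segment_subset_left_Dom:
  assumes "z \<in> Dom" "w \<in> Dom" "adjacent (region_of z) (region_of w)" "Re z \<le> 0" "Re w \<le> 0"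
  shows "closed_segment z w \<subseteq> left_Dom"
  using closed_segment_subset_Dom[OF assms(1-3)] closed_segment_subset[of z "{p. Re p \<le> 0}" w]
    convex_halfspace_Re_le assms(4,5) unfolding left_Dom_def by auto

lemma closed_segment_subset_right_Dom:
  assumes "z \<in> Dom" "w \<in> Dom" "adjacent (region_of z) (region_of w)" "Re z \<ge> 0" "Re w \<ge> 0"
  shows "closed_segment z w \<subseteq> right_Dom"
  using closed_segment_subset_Dom[OF assms(1-3)] closed_segment_subset[of z "{p. Re p \<ge> 0}" w]
    convex_halfspace_Re_ge assms(4,5) unfolding right_Dom_def by auto

lemma starlike_left_Dom: "starlike left_Dom"
  unfolding starlike_def
proof (intro bexI ballI)
  show "-1 \<in> left_Dom" by (auto simp: left_Dom_def in_Dom_iff)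
  fix x assume x: "x \<in> left_Dom"
  show "closed_segment (-1) x \<subseteq> left_Dom"
  proof
    fix p assume "p \<in> closed_segment (-1) x"
    then obtain u where u: "0 \<le> u" "u \<le> 1" "p = (1 - u) *\<^sub>R (-1) + u *\<^sub>R x"
      by (auto simp: closed_segment_def)
    have "u * Re x \<le> 0" using u x by (auto simp: left_Dom_def mult_nonneg_nonpos)
    then have R: "Re p = -(1 - u) + u * Re x" using u by simp
    show "p \<in> left_Dom"
    proof (cases "u = 1")
      case True then show ?thesis using u x by simp
    next
      case False
      then have "Re p < 0" using R u \<open>u * Re x \<le> 0\<close> by auto
      then show ?thesis by (auto simp: left_Dom_def in_Dom_iff)
    qed
  qed
qed

lemma starlike_right_Dom: "starlike right_Dom"
  unfolding starlike_def
proof (intro bexI ballI)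
  show "1 \<in> right_Dom" by (auto simp: right_Dom_def in_Dom_iff)
  fix x assume x: "x \<in> right_Dom"
  show "closed_segment 1 x \<subseteq> right_Dom"
  proof
    fix p assume "p \<in> closed_segment 1 x"
    then obtain u where u: "0 \<le> u" "u \<le> 1" "p = (1 - u) *\<^sub>R 1 + u *\<^sub>R x"
      by (auto simp: closed_segment_def)
    have "u * Re x \<ge> 0" using u x by (auto simp: right_Dom_def)
    then have R: "Re p = (1 - u) + u * Re x" using u by simp
    show "p \<in> right_Dom"
    proof (cases "u = 1")
      case True then show ?thesis using u x by simp
    next
      case False
      then have "Re p > 0" using R u \<open>u * Re x \<ge> 0\<close> by auto
      then show ?thesis by (auto simp: right_Dom_def in_Dom_iff)
    qed
  qed
qed

section \<open>Polygonal paths\<close>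

fun polypath :: "complex list \<Rightarrow> real \<Rightarrow> complex" where
  "polypath [] = linepath 0 0"
| "polypath [p] = linepath p p"
| "polypath (p # q # r) = linepath p q +++ polypath (q # r)"

lemma polypath_Cons: "ps \<noteq> [] \<Longrightarrow> polypath (p # ps) = linepath p (hd ps) +++ polypath ps"
  by (cases ps) auto

lemma path_polypath: "ps \<noteq> [] \<Longrightarrow> path (polypath ps) \<and> pathstart (polypath ps) = hd ps
  \<and> pathfinish (polypath ps) = last ps"
  by (induction ps rule: polypath.induct) auto

definition segments_in :: "complex set \<Rightarrow> complex list \<Rightarrow> bool" where
  "segments_in S ps \<longleftrightarrow> set ps \<subseteq> S \<and> successively (\<lambda>z w. closed_segment z w \<subseteq> S) ps"

lemma path_image_polypath: "segments_in S ps \<Longrightarrow> ps \<noteq> [] \<Longrightarrow> path_image (polypath ps) \<subseteq> S"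
proof (induction ps rule: polypath.induct)
  case 1 then show ?case by simp
next
  case (2 p) then show ?case by (simp add: segments_in_def)
next
  case (3 p q r)
  have "segments_in S (q # r)" using 3(2) by (auto simp: segments_in_def)
  then have "path_image (polypath (q # r)) \<subseteq> S" using 3 by simp
  moreover have "closed_segment p q \<subseteq> S" using 3(2) by (simp add: segments_in_def)
  moreover have "pathstart (polypath (q # r)) = q" using path_polypath[of "q # r"] by simp
  ultimately show ?case by (simp add: path_image_join)
qed

lemma segments_in_appendD: "segments_in S (xs @ ys) \<Longrightarrow> segments_in S xs \<and> segments_in S ys"
  by (auto simp: segments_in_def successively_append_iff)

lemma segments_in_ConsD: "segments_in S (x # xs) \<Longrightarrow> segments_in S xs"
  by (auto simp: segments_in_def successively_Cons)

lemma homotopic_polypath_append: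
  assumes "segments_in S (xs @ z # ys)"
  shows "homotopic_paths S (polypath (xs @ [z]) +++ polypath (z # ys)) (polypath (xs @ z # ys))"
  using assms
proof (induction xs)
  case Nil
  have "path_image (polypath (z # ys)) \<subseteq> S" using Nil path_image_polypath by simp
  then have "homotopic_paths S (linepath z z +++ polypath (z # ys)) (polypath (z # ys))"
    using path_polypath[of "z # ys"] by (intro homotopic_paths_lid') auto
  then show ?case by (metis append_Nil polypath.simps(2))
next
  case (Cons x xs)
  have s1: "segments_in S (xs @ z # ys)" using Cons(2) segments_in_ConsD by simp
  note IH = Cons(1)[OF s1]
  define h where "h = hd (xs @ [z])"
  have h2: "hd (xs @ z # ys) = h" by (cases xs) (auto simp: h_def)
  have seg: "closed_segment x h \<subseteq> S" using Cons(2) unfolding segments_in_def h_def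
    by (cases xs) auto
  have e1: "polypath (x # xs @ [z]) = linepath x h +++ polypath (xs @ [z])"
    using polypath_Cons[of "xs @ [z]" x] by (simp add: h_def)
  have e2: "polypath (x # xs @ z # ys) = linepath x h +++ polypath (xs @ z # ys)"
    using polypath_Cons[of "xs @ z # ys" x] h2 by simp
  have sA: "segments_in S (xs @ [z])" using segments_in_appendD[of S "xs @ [z]" ys] s1
    by (metis append.assoc append_Cons append_Nil segments_in_appendD)
  have sB: "segments_in S (z # ys)" using segments_in_appendD[of S xs "z # ys"] s1 by simp
  have iA: "path_image (polypath (xs @ [z])) \<subseteq> S" using path_image_polypath[OF sA] by simp
  have iB: "path_image (polypath (z # ys)) \<subseteq> S" using path_image_polypath[OF sB] by simp
  have fA: "path (polypath (xs @ [z]))" "pathstart (polypath (xs @ [z])) = h"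
    "pathfinish (polypath (xs @ [z])) = z"
    using path_polypath[of "xs @ [z]"] by (auto simp: h_def)
  have fB: "path (polypath (z # ys))" "pathstart (polypath (z # ys)) = z"
    using path_polypath[of "z # ys"] by auto
  have "homotopic_paths S ((linepath x h +++ polypath (xs @ [z])) +++ polypath (z # ys))
          (linepath x h +++ (polypath (xs @ [z]) +++ polypath (z # ys)))"
    using homotopic_paths_assoc[of "linepath x h" S "polypath (xs @ [z])"
      "polypath (z # ys)"] fA fB iA iB seg
    by (simp add: homotopic_paths_sym)
  also have "homotopic_paths S \<dots> (linepath x h +++ polypath (xs @ z # ys))"
    using IH seg by (intro homotopic_paths_join) (auto simp: fA)
  finally show ?case using e1 e2 by simp
qed

lemma homotopic_polypath_replace:
  assumes "segments_in S (us @ p # mid @ q # rr)" "segments_in S (us @ [p, q] @ rr)"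
    "homotopic_paths S (polypath (p # mid @ [q])) (linepath p q)"
  shows "homotopic_paths S (polypath (us @ p # mid @ q # rr)) (polypath (us @ [p, q] @ rr))"
  using assms(1,2)
proof (induction us)
  case Nil
  have sB: "segments_in S (q # rr)" using segments_in_appendD[of S "p # mid" "q # rr"] Nil by simp
  have "homotopic_paths S (polypath (p # mid @ q # rr))
    (polypath (p # mid @ [q]) +++ polypath (q # rr))"
    using homotopic_polypath_append[of S "p # mid" q rr] Nil by (simp add: homotopic_paths_sym)
  also have "homotopic_paths S \<dots> (linepath p q +++ polypath (q # rr))"
    using assms(3) path_image_polypath[OF sB] path_polypath[of "q # rr"]
      path_polypath[of "p # mid @ [q]"] by (intro homotopic_paths_join) auto
  finally show ?case by simp
next
  case (Cons u us)
  have s1: "segments_in S (us @ p # mid @ q # rr)" "segments_in S (us @ [p, q] @ rr)"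
    using Cons(2,3) segments_in_ConsD by auto
  define h where "h = hd (us @ [p])"
  have h1: "hd (us @ p # mid @ q # rr) = h" "hd (us @ [p, q] @ rr) = h"
    by (cases us; simp add: h_def)+
  have seg: "closed_segment u h \<subseteq> S" using Cons(2) unfolding segments_in_def h_def
    by (cases us) auto
  have "homotopic_paths S (linepath u h +++ polypath (us @ p # mid @ q # rr))
    (linepath u h +++ polypath (us @ [p, q] @ rr))"
    using Cons(1)[OF s1] seg path_polypath[of "us @ p # mid @ q # rr"]
      by (intro homotopic_paths_join) (auto simp: h1)
  then show ?case using polypath_Cons[of "us @ p # mid @ q # rr" u]
    polypath_Cons[of "us @ [p, q] @ rr" u] h1 by simp
qed

section \<open>Cancelling excursions\<close>

definition region_chain :: "complex list \<Rightarrow> bool" where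
  "region_chain ps \<longleftrightarrow> set ps \<subseteq> Dom \<and> successively (\<lambda>z w. adjacent (region_of z) (region_of w)) ps"

lemma region_chain_segments_in: "region_chain ps \<Longrightarrow> segments_in Dom ps"
  unfolding region_chain_def segments_in_def
  using successively_mono[of "\<lambda>z w. adjacent (region_of z) (region_of w)" ps "\<lambda>z w. closed_segment
    z w \<subseteq> Dom"]
  by (meson closed_segment_subset_Dom subsetD)

lemma region_chain_appendD: "region_chain (xs @ ys) \<Longrightarrow> region_chain xs \<and> region_chain ys"
  by (auto simp: region_chain_def successively_append_iff)

lemma region_chain_segments_in_left: "region_chain qs \<Longrightarrow> (\<forall>z\<in>set qs. Re z \<le> 0)
  \<Longrightarrow> segments_in left_Dom qs"
  unfolding region_chain_def segments_in_def
  using successively_mono[of "\<lambda>z w. adjacent (region_of z) (region_of w)" qs "\<lambda>z w. closed_segment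
    z w \<subseteq> left_Dom"]
  by (smt (verit) left_Dom_def IntI mem_Collect_eq closed_segment_subset_left_Dom subset_eq)

lemma region_chain_segments_in_right: "region_chain qs \<Longrightarrow> (\<forall>z\<in>set qs. Re z \<ge> 0)
  \<Longrightarrow> segments_in right_Dom qs"
  unfolding region_chain_def segments_in_def
  using successively_mono[of "\<lambda>z w. adjacent (region_of z) (region_of w)" qs "\<lambda>z w. closed_segment
    z w \<subseteq> right_Dom"]
  by (smt (verit) right_Dom_def IntI mem_Collect_eq closed_segment_subset_right_Dom subset_eq)

lemma left_Dom_subset: "left_Dom \<subseteq> Dom" and right_Dom_subset: "right_Dom \<subseteq> Dom"
  by (auto simp: left_Dom_def right_Dom_def)

lemma homotopic_polypath_linepath:
  assumes "segments_in H qs" "qs \<noteq> []" "closed_segment (hd qs) (last qs) \<subseteq> H" "starlike H" "H \<subseteq> Dom"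
  shows "homotopic_paths Dom (polypath qs) (linepath (hd qs) (last qs))"
proof -
  have sc: "simply_connected H" using assms(4) by (rule starlike_imp_simply_connected)
  have "homotopic_paths H (polypath qs) (linepath (hd qs) (last qs))"
    using sc[unfolded simply_connected_eq_homotopic_paths] path_image_polypath[OF assms(1,2)]
      path_polypath[OF assms(2)] assms(3)
    by auto
  then show ?thesis using assms(5) homotopic_paths_subset by blast
qed

lemma homotopic_polypath_two_regions:
  assumes qs: "region_chain qs" "qs \<noteq> []" and xy: "adjacent x y" "x \<noteq> y"
    and regions: "\<forall>z\<in>set qs. region_of z = x \<or> region_of z = y"
    and ends: "region_of (hd qs) = x" "region_of (last qs) = x"
  shows "homotopic_paths Dom (polypath qs) (linepath (hd qs) (last qs))"
proof -
  have ends_Dom: "hd qs \<in> Dom" "last qs \<in> Dom" using qs unfolding region_chain_def by auto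
  have adj_ends: "adjacent (region_of (hd qs)) (region_of (last qs))" using ends
    by (simp add: adjacent_def)
  from xy obtain k where k: "(x = Gap k \<and> (y = Lhp \<or> y = Rhp)) \<or> (y = Gap k \<and> (x = Lhp \<or> x = Rhp))"
    unfolding adjacent_def by blast
  have hd_last: "hd qs \<in> set qs" "last qs \<in> set qs" using qs(2) by auto
  show ?thesis
  proof (cases "x = Lhp \<or> y = Lhp")
    case True
    then have re: "\<forall>z\<in>set qs. Re z \<le> 0" using regions k
      by (metis order_less_imp_le region_of_eq_Lhp region_of_eq_Gap order_refl region.distinct)
    have "closed_segment (hd qs) (last qs) \<subseteq> left_Dom"
      using closed_segment_subset_left_Dom[OF ends_Dom adj_ends] re hd_last by simp
    then show ?thesis
      using homotopic_polypath_linepath[of left_Dom qs] region_chain_segments_in_left[OF qs(1) re]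
        qs(2) starlike_left_Dom left_Dom_subset by simp
  next
    case False
    then have re: "\<forall>z\<in>set qs. Re z \<ge> 0" using regions k
      by (metis order_less_imp_le region_of_eq_Rhp region_of_eq_Gap order_refl)
    have "closed_segment (hd qs) (last qs) \<subseteq> right_Dom"
      using closed_segment_subset_right_Dom[OF ends_Dom adj_ends] re hd_last by simp
    then show ?thesis
      using homotopic_polypath_linepath[of right_Dom qs] region_chain_segments_in_right[OF qs(1) re]
        qs(2) starlike_right_Dom right_Dom_subset by simp
  qed
qed

lemma region_chain_reduce:
  assumes "region_chain ps" "ps \<noteq> []" "foldl push_reduce [] (map region_of ps) = [Gap b, X, Gap a]"
  shows "\<exists>ps'. region_chain ps' \<and> ps' \<noteq> [] \<and> hd ps' = hd ps \<and> last ps' = last ps \<and>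
     set (map region_of ps') \<subseteq> {Gap a, X, Gap b} \<and> homotopic_paths Dom (polypath ps) (polypath ps')"
  using assms
proof (induction "length ps" arbitrary: ps rule: less_induct)
  case less
  obtain s w where sw: "map region_of ps = s # w" using less(3) by (cases ps) auto
  have fw: "foldl push_reduce [s] w = [Gap b, X, Gap a]" using less(4) sw by simp
  show ?case
  proof (cases "has_backtrack (map region_of ps)")
    case False
    then have "set (map region_of ps) \<subseteq> {Gap a, X, Gap b}" using has_backtrack_or_subset[OF fw] sw
      by auto
    moreover have "homotopic_paths Dom (polypath ps) (polypath ps)"
      using path_image_polypath[OF region_chain_segments_in[OF less(2)] less(3)]
        path_polypath[OF less(3)] by (simp add: homotopic_paths_refl)
    ultimately show ?thesis using less(2,3) by blast
  next
    case True
    then obtain u x y m v where bt: "map region_of ps = u @ [x] @ replicate (Suc m) y @ [x] @ v"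
      "x \<noteq> y"
      unfolding has_backtrack_def by blast
    then obtain pu R1 where R1: "ps = pu @ R1" "map region_of pu = u"
      "map region_of R1 = [x] @ replicate (Suc m) y @ [x] @ v"
      by (metis map_eq_append_conv)
    then obtain p R2 where R2: "R1 = p # R2" "region_of p = x"
      "map region_of R2 = replicate (Suc m) y @ [x] @ v"
      by (metis append_Cons append_Nil map_eq_Cons_conv)
    then obtain pm R3 where R3: "R2 = pm @ R3" "map region_of pm = replicate (Suc m) y"
      "map region_of R3 = [x] @ v"
      by (metis map_eq_append_conv)
    then obtain q pv where R4: "R3 = q # pv" "region_of q = x" "map region_of pv = v"
      by (metis append_Cons append_Nil map_eq_Cons_conv)
    have ps: "ps = pu @ p # pm @ q # pv" using R1 R2 R3 R4 by simp
    have pmne: "pm \<noteq> []" using R3 by auto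
    have pmy: "\<forall>z\<in>set pm. region_of z = y" using R3(2)
      by (metis in_set_replicate imageI list.set_map)
    define ps' where "ps' = pu @ [p, q] @ pv"
    have vps: "region_chain (pu @ [p]) \<and> region_chain (p # pm @ [q]) \<and> region_chain (q # pv)"
      using less(2) unfolding ps
      by (metis append_Cons append_Nil append_assoc region_chain_appendD)
    have v': "region_chain ps'"
      using vps less(2) unfolding region_chain_def ps'_def ps
      by (auto simp: successively_append_iff successively_Cons adjacent_def R2(2) R4(2))
    have map': "map region_of ps' = u @ [x, x] @ v" using R1 R2 R4 by (simp add: ps'_def)
    have f': "foldl push_reduce [] (map region_of ps') = [Gap b, X, Gap a]"
      using less(4) bt foldl_push_reduce_remove_excursion[OF bt(2)[symmetric], of u m v] map'
        by simp
    have len: "length ps' < length ps" using pmne by (simp add: ps ps'_def)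
    have hd': "hd ps' = hd ps" and last': "last ps' = last ps" by (cases pu; simp add: ps ps'_def)+
    have ne': "ps' \<noteq> []" by (simp add: ps'_def)
    obtain ps'' where ps'': "region_chain ps''" "ps'' \<noteq> []" "hd ps'' = hd ps'"
      "last ps'' = last ps'"
      "set (map region_of ps'') \<subseteq> {Gap a, X, Gap b}"
        "homotopic_paths Dom (polypath ps') (polypath ps'')"
      using less(1)[OF len v' ne' f'] by blast
    have adjxy: "adjacent x y"
      using vps pmne pmy R2(2) unfolding region_chain_def
        by (cases pm) (auto simp: successively_Cons)
    have sub: "homotopic_paths Dom (polypath (p # pm @ [q])) (linepath p q)"
      using homotopic_polypath_two_regions[of "p # pm @ [q]" x y] vps adjxy bt(2) pmy R2(2) R4(2)
        by auto
    have "homotopic_paths Dom (polypath ps) (polypath ps')"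
      unfolding ps ps'_def
      using homotopic_polypath_replace[of Dom pu p pm q pv] sub
        region_chain_segments_in[OF less(2)] region_chain_segments_in[OF v']
      by (simp add: ps ps'_def)
    then have "homotopic_paths Dom (polypath ps) (polypath ps'')"
      using ps''(6) homotopic_paths_trans by blast
    then show ?thesis using ps'' hd' last' by auto
  qed
qed

section \<open>Elementary pieces\<close>

lemma floor_between:
  fixes s t :: real
  assumes "\<lfloor>s\<rfloor> < \<lfloor>t\<rfloor>" "t \<notin> \<int>"
  shows "s < of_int \<lfloor>t\<rfloor>" "of_int \<lfloor>t\<rfloor> < t"
proof -
  show "s < of_int \<lfloor>t\<rfloor>" using assms(1) by (meson floor_less_iff)
  show "of_int \<lfloor>t\<rfloor> < t" using floor_less_not_Ints[OF assms(2)] .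
qed

lemma convex_axis_floor_eq:
  assumes "convex B" "B \<subseteq> Dom" "z \<in> B" "w \<in> B" "Re z = 0" "Re w = 0"
  shows "\<lfloor>Im z\<rfloor> = \<lfloor>Im w\<rfloor>"
proof (rule ccontr)
  assume ne: "\<lfloor>Im z\<rfloor> \<noteq> \<lfloor>Im w\<rfloor>"
  have main: "False" if "z' \<in> B" "w' \<in> B" "Re z' = 0" "Re w' = 0" "\<lfloor>Im z'\<rfloor> < \<lfloor>Im w'\<rfloor>" for z' w'
  proof -
    have "Im w' \<notin> \<int>" using that assms(2) by (auto simp: in_Dom_iff)
    define n where "n = real_of_int \<lfloor>Im w'\<rfloor>"
    have n: "Im z' < n" "n < Im w'" using floor_between[OF that(5) \<open>Im w' \<notin> \<int>\<close>]
      by (auto simp: n_def)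
    define u where "u = (n - Im z') / (Im w' - Im z')"
    have u: "0 \<le> u" "u \<le> 1" using n by (auto simp: u_def divide_simps)
    define p where "p = (1 - u) *\<^sub>R z' + u *\<^sub>R w'"
    have "p \<in> B" using convexD[OF assms(1) that(1,2), of "1 - u" u] u by (simp add: p_def)
    moreover have "Re p = 0" using that by (simp add: p_def)
    moreover have "Im p = n"
    proof -
      have "Im p = Im z' + u * (Im w' - Im z')" by (simp add: p_def algebra_simps)
      also have "\<dots> = n" using n by (simp add: u_def)
      finally show ?thesis .
    qed
    ultimately show False using assms(2) by (auto simp: in_Dom_iff n_def)
  qed
  show False using ne main[of z w] main[of w z] assms by linarith
qed

definition opposite_sides :: "complex \<Rightarrow> complex \<Rightarrow> bool" where
  "opposite_sides z w \<longleftrightarrow> (Re z < 0 \<and> Re w > 0) \<or> (Re z > 0 \<and> Re w < 0)"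

lemma convex_adjacent:
  assumes "convex B" "B \<subseteq> Dom" "z \<in> B" "w \<in> B" "\<not> opposite_sides z w"
  shows "adjacent (region_of z) (region_of w)"
proof (cases "Re z = 0 \<and> Re w = 0")
  case True
  then show ?thesis using convex_axis_floor_eq[OF assms(1-4)]
    by (simp add: adjacent_def region_of_def)
next
  case False
  then show ?thesis using assms(5) unfolding adjacent_def region_of_def opposite_sides_def by auto
qed

lemma connected_component_iRZ_floor_eq:
  assumes "connected_component iRZ a b"
  shows "\<lfloor>Im a\<rfloor> = \<lfloor>Im b\<rfloor>"
proof (rule ccontr)
  obtain T where T: "connected T" "T \<subseteq> iRZ" "a \<in> T" "b \<in> T"
    using assms unfolding connected_component_def by blast
  have cI: "connected (Im ` T)"
    using T(1) by (intro connected_continuous_image) (auto intro: continuous_intros)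
  have main: False if "z \<in> T" "w \<in> T" "\<lfloor>Im z\<rfloor> < \<lfloor>Im w\<rfloor>" for z w
  proof -
    have "Im w \<notin> \<int>" using that T(2) by (auto simp: iRZ_def)
    note n = floor_between[OF that(3) this]
    have "of_int \<lfloor>Im w\<rfloor> \<in> Im ` T"
      using connected_contains_Icc[OF cI, of "Im z" "Im w"] that n by auto
    then obtain p where "p \<in> T" "Im p = of_int \<lfloor>Im w\<rfloor>" by auto
    then show False using T(2) by (auto simp: iRZ_def)
  qed
  assume "\<lfloor>Im a\<rfloor> \<noteq> \<lfloor>Im b\<rfloor>"
  then show False using main[of a b] main[of b a] T by linarith
qed

definition half_arc :: "real \<Rightarrow> complex \<Rightarrow> complex \<Rightarrow> real \<Rightarrow> complex" where
  "half_arc \<sigma> a b t = a + of_real t * (b - a) + of_real (\<sigma> * sin (pi * t))"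

lemma half_arc_elem_slalom_side:
  assumes "a \<in> iRZ" "b \<in> iRZ" "\<lfloor>Im a\<rfloor> \<noteq> \<lfloor>Im b\<rfloor>" "\<sigma> = 1 \<or> \<sigma> = -1"
  shows "elem_slalom_side (\<sigma> = 1) (half_arc \<sigma> a b)" "pathstart (half_arc \<sigma> a b) = a"
    "pathfinish (half_arc \<sigma> a b) = b"
    "path_image (half_arc \<sigma> a b) \<subseteq> (if \<sigma> = 1 then right_Dom else left_Dom)"
proof -
  let ?E = "half_arc \<sigma> a b"
  have Ra: "Re a = 0" "Re b = 0" using assms by (auto simp: iRZ_def)
  have ReE: "Re (?E t) = \<sigma> * sin (pi * t)" for t using Ra by (simp add: half_arc_def)
  have ImE: "Im (?E t) = Im a + t * (Im b - Im a)" for t by (simp add: half_arc_def algebra_simps)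
  show ps: "pathstart ?E = a" and pf: "pathfinish ?E = b"
    by (auto simp: pathstart_def pathfinish_def half_arc_def)
  have pE: "path ?E" unfolding path_def half_arc_def by (intro continuous_intros)
  have "Im a \<noteq> Im b" using assms(3) by auto
  then have "inj_on ?E {0..1}" unfolding inj_on_def using ImE
    by (metis add_left_cancel mult_cancel_right right_minus_eq)
  then have sp: "simple_path ?E" using pE arc_imp_simple_path arc_def by blast
  have int: "(if \<sigma> = 1 then Re (?E t) > 0 else Re (?E t) < 0)" if "t \<in> {0<..<1}" for t
  proof -
    have "sin (pi * t) > 0" using that by (intro sin_gt_zero) auto
    then show ?thesis using ReE assms(4) by auto
  qed
  have img: "path_image ?E \<subseteq> (if \<sigma> = 1 then right_Dom else left_Dom)"
  proof
    fix z assume "z \<in> path_image ?E"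
    then obtain t where t: "t \<in> {0..1}" "z = ?E t" by (auto simp: path_image_def)
    show "z \<in> (if \<sigma> = 1 then right_Dom else left_Dom)"
    proof (cases "t = 0 \<or> t = 1")
      case True
      then have "z = a \<or> z = b" using ps pf t by (auto simp: pathstart_def pathfinish_def)
      then show ?thesis using assms Ra by (auto simp: right_Dom_def left_Dom_def in_Dom_iff iRZ_def)
    next
      case False
      then have "t \<in> {0<..<1}" using t by auto
      from int[OF this] show ?thesis using t by (auto simp: right_Dom_def left_Dom_def in_Dom_iff)
    qed
  qed
  then show "path_image ?E \<subseteq> (if \<sigma> = 1 then right_Dom else left_Dom)" .
  have "path_image ?E \<subseteq> Dom" using img right_Dom_subset left_Dom_subset by (auto split: if_splits)
  moreover have "\<not> connected_component iRZ (pathstart ?E) (pathfinish ?E)"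
    using connected_component_iRZ_floor_eq assms(3) ps pf by auto
  ultimately show "elem_slalom_side (\<sigma> = 1) ?E"
    unfolding elem_slalom_side_def using sp ps pf assms(1,2) int by auto
qed

definition convex_step :: "(real \<Rightarrow> complex) \<Rightarrow> real \<Rightarrow> real \<Rightarrow> bool" where
  "convex_step g y y' \<longleftrightarrow> y < y' \<and> (\<exists>B. convex B \<and> B \<subseteq> Dom \<and> g ` {y..y'} \<subseteq> B)
    \<and> \<not> opposite_sides (g y) (g y')"

lemma convex_steps_hd_le_last: "successively (convex_step g) zs \<Longrightarrow> zs \<noteq> [] \<Longrightarrow> hd zs \<le> last zs"
proof (induction zs rule: induct_list012)
  case (3 x y xs)
  then show ?case by (auto simp: convex_step_def)
qed auto

lemma convex_step_adjacent: "convex_step g x y \<Longrightarrow> adjacent (region_of (g x)) (region_of (g y))"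
  unfolding convex_step_def using convex_adjacent
    by (metis atLeastAtMost_iff image_subset_iff less_eq_real_def order_refl)

lemma homotopic_subpath_polypath:
  assumes "path g" "path_image g \<subseteq> Dom" "set zs \<subseteq> {0..1}" "successively (convex_step g) zs"
    "zs \<noteq> []"
  shows "homotopic_paths Dom (subpath (hd zs) (last zs) g) (polypath (map g zs))"
  using assms(3-5)
proof (induction zs rule: induct_list012)
  case 1 then show ?case by simp
next
  case (2 y)
  have "subpath y y g = linepath (g y) (g y)"
    by (auto simp: subpath_def linepath_def fun_eq_iff algebra_simps)
  moreover have "homotopic_paths Dom (linepath (g y) (g y)) (linepath (g y) (g y))"
  proof -
    have p: "path (linepath (g y) (g y))" by (rule path_linepath)
    have "path_image (linepath (g y) (g y)) \<subseteq> Dom" using 2 assms(2) by (auto simp: path_image_def)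
    then show ?thesis using p homotopic_paths_refl by blast
  qed
  moreover have e: "hd [y] = y" "last [y] = y" "polypath (map g [y]) = linepath (g y) (g y)"
    by simp_all
  ultimately show ?case by metis
next
  case (3 y y' xs)
  note 3 = 3(2-)[unfolded successively_Cons] 3(2-)
  have IH: "homotopic_paths Dom (subpath y' (last (y' # xs)) g) (polypath (map g (y' # xs)))"
    using 3 by auto
  have g3: "convex_step g y y'" using 3 by simp
  have le: "y' \<le> last (y' # xs)" using convex_steps_hd_le_last[of g "y' # xs"] 3 by simp
  have "last (y' # xs) \<in> set (y' # xs)" by (rule last_in_set) simp
  then have in01: "y \<in> {0..1}" "y' \<in> {0..1}" "last (y' # xs) \<in> {0..1}" using 3(1-3) by auto
  have "homotopic_paths Dom (subpath y (last (y' # xs)) g)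
          (subpath y y' g +++ subpath y' (last (y' # xs)) g)"
    using homotopic_join_subpaths1[OF assms(1,2) in01] le g3
    by (simp add: convex_step_def homotopic_paths_sym)
  also have "homotopic_paths Dom \<dots> (linepath (g y) (g y') +++ polypath (map g (y' # xs)))"
  proof (rule homotopic_paths_join[OF _ IH])
    obtain B where B: "convex B" "B \<subseteq> Dom" "g ` {y..y'} \<subseteq> B" using g3
      by (auto simp: convex_step_def)
    show "homotopic_paths Dom (subpath y y' g) (linepath (g y) (g y'))"
    proof (rule homotopic_paths_linear)
      show "path (subpath y y' g)" using assms(1) in01 by (simp add: path_subpath)
      show "closed_segment (subpath y y' g t) (linepath (g y) (g y') t) \<subseteq> Dom" if "t \<in> {0..1}" for t
      proof -
        have yy: "y \<le> y'" using g3 by (simp add: convex_step_def)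
        have "0 \<le> (y' - y) * t" "(y' - y) * t \<le> y' - y"
          using that yy by (auto simp: mult_left_le)
        then have "(y' - y) * t + y \<in> {y..y'}" by auto
        then have s1: "subpath y y' g t \<in> B" using B by (auto simp: subpath_def)
        have "g y \<in> B" "g y' \<in> B" using B yy by auto
        then have cs: "closed_segment (g y) (g y') \<subseteq> B" using B(1) convex_contains_segment by blast
        have "linepath (g y) (g y') t \<in> closed_segment (g y) (g y')"
          using that by (metis path_image_linepath path_image_def imageI)
        then have "subpath y y' g t \<in> B" "linepath (g y) (g y') t \<in> B" using s1 cs by auto
        then show ?thesis using B convex_contains_segment by blast
      qed
    qed auto
  qed (simp add: pathfinish_def pathstart_def subpath_def)
  finally show ?case by simp
qed

lemma homotopic_paths_imp_slalom_homotopic: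
  assumes "homotopic_paths Dom p q" "pathstart p \<in> iRZ" "pathfinish p \<in> iRZ"
  shows "slalom_homotopic p q"
proof -
  have h: "homotopic_with_canon (\<lambda>r. pathstart r = pathstart p \<and> pathfinish r = pathfinish p)
    {0..1} Dom p q"
    using assms(1) unfolding homotopic_paths_def .
  show ?thesis unfolding slalom_homotopic_def
    by (rule homotopic_with_mono[OF h]) (use assms in \<open>auto simp: pathstart_def pathfinish_def\<close>)
qed

lemma homotopy_elem_slalom_piece:
  assumes "path g" "path_image g \<subseteq> Dom" "set zs \<subseteq> {0..1}" "successively (convex_step g) zs"
    "zs \<noteq> []"
    "foldl push_reduce [] (map (region_of \<circ> g) zs) = [Gap b, X, Gap a]" "a \<noteq> b" "X = Lhp \<or> X = Rhp"
    "region_of (g (hd zs)) = Gap a" "region_of (g (last zs)) = Gap b"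
  shows "homotopy_elem_slalom (subpath (hd zs) (last zs) g)"
proof -
  define ps where "ps = map g zs"
  have gD: "g y \<in> Dom" if "y \<in> {0..1}" for y using assms(2) that by (auto simp: path_image_def)
  have vps: "region_chain ps"
    unfolding region_chain_def ps_def
  proof
    show "set (map g zs) \<subseteq> Dom" using gD assms(3) by auto
    show "successively (\<lambda>z w. adjacent (region_of z) (region_of w)) (map g zs)"
      using assms(4) unfolding successively_map
      by (rule successively_mono) (auto simp: convex_step_adjacent)
  qed
  have pne: "ps \<noteq> []" using assms(5) by (simp add: ps_def)
  obtain ps' where ps': "region_chain ps'" "ps' \<noteq> []" "hd ps' = hd ps" "last ps' = last ps"
    "set (map region_of ps') \<subseteq> {Gap a, X, Gap b}" "homotopic_paths Dom (polypath ps) (polypath ps')"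
    using region_chain_reduce[OF vps pne, of b X a] assms(6) by (auto simp: ps_def)
  have hl01: "hd zs \<in> {0..1}" "last zs \<in> {0..1}" using assms(3,5) hd_in_set last_in_set by blast+
  define a0 where "a0 = g (hd zs)"
  define b0 where "b0 = g (last zs)"
  have a0: "a0 \<in> iRZ" "\<lfloor>Im a0\<rfloor> = a" using assms(9) gD[OF hl01(1)]
    by (auto simp: a0_def region_of_eq_Gap iRZ_def in_Dom_iff)
  have b0: "b0 \<in> iRZ" "\<lfloor>Im b0\<rfloor> = b" using assms(10) gD[OF hl01(2)]
    by (auto simp: b0_def region_of_eq_Gap iRZ_def in_Dom_iff)
  have hps: "hd ps = a0" "last ps = b0" using assms(5)
    by (auto simp: ps_def a0_def b0_def hd_map last_map)
  define \<sigma> where "\<sigma> = (if X = Rhp then 1 else -1::real)"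
  define H where "H = (if \<sigma> = 1 then right_Dom else left_Dom)"
  have E: "elem_slalom_side (\<sigma> = 1) (half_arc \<sigma> a0 b0)" "pathstart (half_arc \<sigma> a0 b0) = a0"
    "pathfinish (half_arc \<sigma> a0 b0) = b0" "path_image (half_arc \<sigma> a0 b0) \<subseteq> H"
    using half_arc_elem_slalom_side[OF a0(1) b0(1), of \<sigma>] a0 b0 assms(7) by (auto simp: \<sigma>_def H_def)
  have sH: "starlike H" "H \<subseteq> Dom"
    using starlike_left_Dom starlike_right_Dom left_Dom_subset right_Dom_subset
      by (auto simp: H_def)
  have segH: "segments_in H ps'"
  proof (cases "X = Rhp")
    case True
    then have "\<forall>z\<in>set ps'. Re z \<ge> 0" using ps'(5) by (auto simp: region_of_eq_Rhp region_of_eq_Gap)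
    then show ?thesis using region_chain_segments_in_right[OF ps'(1)] True
      by (simp add: H_def \<sigma>_def)
  next
    case False
    then have "X = Lhp" using assms(8) by auto
    then have "\<forall>z\<in>set ps'. Re z \<le> 0" using ps'(5) by (auto simp: region_of_eq_Lhp region_of_eq_Gap)
    then show ?thesis using region_chain_segments_in_left[OF ps'(1)] False
      by (simp add: H_def \<sigma>_def)
  qed
  have pE: "path (half_arc \<sigma> a0 b0)" using E(1)
    by (auto simp: elem_slalom_side_def simple_path_imp_path)
  have "homotopic_paths H (polypath ps') (half_arc \<sigma> a0 b0)"
    using starlike_imp_simply_connected[OF sH(1), unfolded simply_connected_eq_homotopic_paths]
      path_image_polypath[OF segH ps'(2)] path_polypath[OF ps'(2)] E pE ps'(3,4) hps by auto
  then have h3: "homotopic_paths Dom (polypath ps') (half_arc \<sigma> a0 b0)"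
    using sH(2) homotopic_paths_subset by blast
  have h1: "homotopic_paths Dom (subpath (hd zs) (last zs) g) (polypath ps)"
    using homotopic_subpath_polypath[OF assms(1-5)] by (simp add: ps_def)
  have "homotopic_paths Dom (subpath (hd zs) (last zs) g) (half_arc \<sigma> a0 b0)"
    using h1 ps'(6) h3 homotopic_paths_trans by blast
  then have "slalom_homotopic (subpath (hd zs) (last zs) g) (half_arc \<sigma> a0 b0)"
    by (rule homotopic_paths_imp_slalom_homotopic)
      (auto simp: a0 b0 a0_def[symmetric] b0_def[symmetric])
  then show ?thesis unfolding homotopy_elem_slalom_def elem_slalom_def using E(1) by blast
qed

text \<open>The reduced walk of a slalom curve with gaps \<open>A i\<close> and sides \<open>r i\<close>, current region
  first.\<close>

fun slalom_stack :: "(nat \<Rightarrow> int) \<Rightarrow> (nat \<Rightarrow> region) \<Rightarrow> nat \<Rightarrow> region list" where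
  "slalom_stack A r 0 = [Gap (A 0)]"
| "slalom_stack A r (Suc i) = Gap (A (Suc i)) # r i # slalom_stack A r i"

lemma slalom_stack_ne: "slalom_stack A r i \<noteq> []" by (cases i) auto
lemma hd_slalom_stack: "hd (slalom_stack A r i) = Gap (A i)" by (cases i) auto
lemma length_slalom_stack: "length (slalom_stack A r i) = 2 * i + 1" by (induction i) auto

lemma convex_steps_hd_less_last: "successively (convex_step g) zs \<Longrightarrow> length zs \<ge> 2 \<Longrightarrow> hd zs < last zs"
proof (induction zs rule: induct_list012)
  case (3 x y xs)
  then have "y \<le> last (y # xs)" using convex_steps_hd_le_last[of g "y # xs"] by simp
  then show ?case using 3 by (auto simp: convex_step_def)
qed auto


lemma homotopy_elem_slalom_pieces:
  assumes g: "path g" "path_image g \<subseteq> Dom"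
  shows "set zs \<subseteq> {0..1} \<Longrightarrow> successively (convex_step g) zs \<Longrightarrow> zs \<noteq> [] \<Longrightarrow>
     foldl push_reduce [] (map (region_of \<circ> g) zs) = slalom_stack A r (Suc i) \<Longrightarrow>
     \<forall>j\<le>i. A j \<noteq> A (Suc j) \<and> (r j = Lhp \<or> r j = Rhp) \<Longrightarrow>
     \<exists>tt. tt 0 = hd zs \<and> tt (Suc i) = last zs \<and> (\<forall>j<Suc i. tt j < tt (Suc j)) \<and>
       (\<forall>j<Suc i. homotopy_elem_slalom (subpath (tt j) (tt (Suc j)) g))"
proof (induction i arbitrary: zs)
  case 0
  obtain s w where sw: "map (region_of \<circ> g) zs = s # w" using 0(3) by (cases zs) auto
  have f: "foldl push_reduce [s] w = [Gap (A 1), r 0, Gap (A 0)]" using 0(4) unfolding sw by simp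
  have "last (foldl push_reduce [s] w) = s" using last_foldl_push_reduce[of "[s]" w] by simp
  then have s: "s = Gap (A 0)" using f by simp
  have hs: "region_of (g (hd zs)) = Gap (A 0)" using sw s 0(3) by (cases zs) auto
  have "w \<noteq> []" using f by auto
  then have wl: "last w = Gap (A 1)" using hd_foldl_push_reduce[of w "[s]"] f by simp
  have "region_of (g (last zs)) = last (map (region_of \<circ> g) zs)" using 0(3) by (simp add: last_map)
  then have ls: "region_of (g (last zs)) = Gap (A 1)" using sw wl \<open>w \<noteq> []\<close> by simp
  have len: "length zs \<ge> 2" using sw \<open>w \<noteq> []\<close>
    by (metis Suc_le_eq length_Cons length_greater_0_conv length_map numeral_2_eq_2 Suc_le_mono)
  have pc: "homotopy_elem_slalom (subpath (hd zs) (last zs) g)"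
    using homotopy_elem_slalom_piece[OF g 0(1-3), of "A 1" "r 0" "A 0"] 0(4,5) hs ls by auto
  have lt: "hd zs < last zs" using convex_steps_hd_less_last[OF 0(2) len] .
  show ?case
    by (rule exI[of _ "\<lambda>j. if j = 0 then hd zs else last zs"]) (use pc lt in auto)
next
  case (Suc i)
  obtain s w where sw: "map (region_of \<circ> g) zs = s # w" using Suc(4) by (cases zs) auto
  have f: "foldl push_reduce [s] w = [Gap (A (Suc (Suc i))), r (Suc i)]
    @ slalom_stack A r (Suc i)" using Suc(5) unfolding sw by simp
  obtain w1 w2 where w: "w = w1 @ w2" "foldl push_reduce [s] w1 = slalom_stack A r (Suc i)"
    "w2 \<noteq> []"
    "foldl push_reduce [hd (slalom_stack A r (Suc i))] w2 = [Gap (A (Suc (Suc i))), r (Suc i)]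
      @ [hd (slalom_stack A r (Suc i))]"
    using foldl_push_reduce_split[OF f _ slalom_stack_ne] by (auto simp: length_slalom_stack)
  have "w1 \<noteq> []" using w(2) by auto
  then have lw1: "last w1 = Gap (A (Suc i))" using hd_foldl_push_reduce[of w1 "[s]"] w(2)
    by (simp add: hd_slalom_stack)
  obtain us vs where uv: "zs = us @ vs" "map (region_of \<circ> g) us = s # w1"
    "map (region_of \<circ> g) vs = w2"
    using sw w(1) by (metis append_Cons map_eq_append_conv)
  have usne: "us \<noteq> []" using uv by auto
  have vsne: "vs \<noteq> []" using uv w(3) by auto
  have s1: "successively (convex_step g) us" "successively (convex_step g) (last us # vs)"
    using Suc(3) uv(1) usne vsne by (auto simp: successively_append_iff successively_Cons)
  have IH: "\<exists>tt. tt 0 = hd us \<and> tt (Suc i) = last us \<and> (\<forall>j<Suc i. tt j < tt (Suc j)) \<and>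
       (\<forall>j<Suc i. homotopy_elem_slalom (subpath (tt j) (tt (Suc j)) g))"
  proof -
    have a: "set us \<subseteq> {0..1}" using Suc(2) uv(1) by auto
    have b: "foldl push_reduce [] (map (region_of \<circ> g) us) = slalom_stack A r (Suc i)"
      unfolding uv(2) using w(2) by simp
    show ?thesis using Suc(1)[OF a s1(1) usne b] Suc(6) by simp
  qed
  then obtain tt where tt: "tt 0 = hd us" "tt (Suc i) = last us" "\<forall>j<Suc i. tt j < tt (Suc j)"
    "\<forall>j<Suc i. homotopy_elem_slalom (subpath (tt j) (tt (Suc j)) g)" by blast
  define zs2 where "zs2 = last us # vs"
  have "region_of (g (last us)) = last (map (region_of \<circ> g) us)" using usne by (simp add: last_map)
  then have h2: "region_of (g (hd zs2)) = Gap (A (Suc i))" using uv(2) lw1 \<open>w1 \<noteq> []\<close>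
    by (simp add: zs2_def)
  have m2: "map (region_of \<circ> g) zs2 = Gap (A (Suc i)) # w2" using h2 uv(3) by (simp add: zs2_def)
  have f2: "foldl push_reduce [] (map (region_of \<circ> g) zs2)
    = [Gap (A (Suc (Suc i))), r (Suc i), Gap (A (Suc i))]"
    using m2 w(4) by (simp add: hd_slalom_stack)
  have "last w2 = Gap (A (Suc (Suc i)))"
    using hd_foldl_push_reduce[OF w(3), of "[Gap (A (Suc i))]"] w(4) by (simp add: hd_slalom_stack)
  moreover have "region_of (g (last zs2)) = last (map (region_of \<circ> g) zs2)"
    by (simp add: last_map zs2_def)
  ultimately have l2: "region_of (g (last zs2)) = Gap (A (Suc (Suc i)))" using m2 w(3) by simp
  have "last us \<in> set us" using usne by simp
  then have set2: "set zs2 \<subseteq> {0..1}" using Suc(2) uv(1) by (auto simp: zs2_def)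
  have pc: "homotopy_elem_slalom (subpath (hd zs2) (last zs2) g)"
    using homotopy_elem_slalom_piece[OF g set2 s1(2)[folded zs2_def] _ f2] Suc(6) h2 l2
      by (auto simp: zs2_def)
  have lt: "hd zs2 < last zs2" using convex_steps_hd_less_last[OF s1(2)[folded zs2_def]] vsne
    by (cases vs) (auto simp: zs2_def)
  have lz: "last zs = last zs2" using uv(1) vsne by (simp add: zs2_def)
  have hz: "hd zs = hd us" using uv(1) usne by simp
  show ?case
    apply (rule exI[of _ "tt(Suc (Suc i) := last zs)"])
    using tt pc lt lz hz by (auto simp: zs2_def less_Suc_eq)
qed

section \<open>Region walks of grid rows\<close>

definition axis_crossing :: "complex \<Rightarrow> complex \<Rightarrow> complex" where
  "axis_crossing z w = z + of_real (Re z / (Re z - Re w)) * (w - z)"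

text \<open>The regions met on the segment from \<open>z\<close> to \<open>w\<close> after leaving \<open>z\<close>, for \<open>z\<close>,
  \<open>w\<close> in a convex subset of \<open>Dom\<close>: passing between the half-planes crosses the gap at
  \<open>axis_crossing z w\<close>.\<close>

definition crossing_regions :: "complex \<Rightarrow> complex \<Rightarrow> region list" where
  "crossing_regions z w
    = (if opposite_sides z w then [Gap \<lfloor>Im (axis_crossing z w)\<rfloor>, region_of w] else [region_of w])"

lemma axis_crossing_on_axis:
  assumes "opposite_sides z w"
  shows "Re (axis_crossing z w) = 0" "axis_crossing z w \<in> closed_segment z w"
proof -
  have ne: "Re z - Re w \<noteq> 0" using assms by (auto simp: opposite_sides_def)
  define u where "u = Re z / (Re z - Re w)"
  have u: "0 \<le> u" "u \<le> 1" using assms by (auto simp: opposite_sides_def u_def divide_simps)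
  have "axis_crossing z w = z + of_real u * (w - z)" by (simp add: axis_crossing_def u_def)
  also have "\<dots> = (1 - u) *\<^sub>R z + u *\<^sub>R w" by (simp add: scaleR_conv_of_real algebra_simps)
  finally have "axis_crossing z w = (1 - u) *\<^sub>R z + u *\<^sub>R w" .
  then show "axis_crossing z w \<in> closed_segment z w" using u by (auto simp: closed_segment_def)
  show "Re (axis_crossing z w) = 0" using ne by (simp add: axis_crossing_def field_simps)
qed

lemma crossing_regions_ne: "crossing_regions z w \<noteq> []" and last_crossing_regions: "last
  (crossing_regions z w) = region_of w"
  by (auto simp: crossing_regions_def)

lemma convex_axis_floor_const:
  assumes "convex B" "B \<subseteq> Dom"
  shows "\<exists>k. \<forall>z\<in>B. Re z = 0 \<longrightarrow> \<lfloor>Im z\<rfloor> = k"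
proof (cases "\<exists>z0\<in>B. Re z0 = 0")
  case True
  then obtain z0 where "z0 \<in> B" "Re z0 = 0" by blast
  then show ?thesis using convex_axis_floor_eq[OF assms] by metis
qed auto

lemma region_of_in_star: "(\<forall>z\<in>B. Re z = 0 \<longrightarrow> \<lfloor>Im z\<rfloor> = k) \<Longrightarrow> z \<in> B \<Longrightarrow> region_of z \<in> {Lhp, Rhp, Gap k}"
  by (auto simp: region_of_def)

lemma crossing_regions_star:
  assumes "convex B" "B \<subseteq> Dom" "z \<in> B" "w \<in> B" "\<forall>z\<in>B. Re z = 0 \<longrightarrow> \<lfloor>Im z\<rfloor> = k"
  shows "set (crossing_regions z w) \<subseteq> {Lhp, Rhp, Gap k}"
    "successively adjacent (region_of z # crossing_regions z w)"
proof -
  have cB: "opposite_sides z w \<Longrightarrow> axis_crossing z w \<in> B"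
    using axis_crossing_on_axis(2) assms(1,3,4) convex_contains_segment by blast
  show "set (crossing_regions z w) \<subseteq> {Lhp, Rhp, Gap k}"
    using region_of_in_star[OF assms(5)] assms(4) cB axis_crossing_on_axis(1) assms(5)
      by (auto simp: crossing_regions_def)
  show "successively adjacent (region_of z # crossing_regions z w)"
  proof (cases "opposite_sides z w")
    case True
    then show ?thesis by (auto simp: crossing_regions_def adjacent_def opposite_sides_def
      region_of_def)
  next
    case False
    then show ?thesis using convex_adjacent[OF assms(1-4)] by (simp add: crossing_regions_def)
  qed
qed

lemma successively_adjacent_append:
  assumes "successively adjacent (a # w1)" "successively adjacent (b # w2)" "w1 \<noteq> []" "last w1 = b"
  shows "successively adjacent (a # w1 @ w2)"
proof -
  have "successively adjacent ((a # w1) @ w2)"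
    using assms unfolding successively_append_iff
    by (cases w2) (auto simp: successively_Cons)
  then show ?thesis by simp
qed

definition walk_regions :: "(nat \<Rightarrow> complex) \<Rightarrow> nat \<Rightarrow> region list" where
  "walk_regions p m = concat (map (\<lambda>j. crossing_regions (p j) (p (Suc j))) [0..<m])"

lemma walk_regions_Suc: "walk_regions p (Suc m) = walk_regions p m
  @ crossing_regions (p m) (p (Suc m))"
  by (simp add: walk_regions_def)

lemma walk_regions_0: "walk_regions p 0 = []" by (simp add: walk_regions_def)

lemma last_walk_regions: "m > 0 \<Longrightarrow> last (walk_regions p m) = region_of (p m)"
  by (cases m) (auto simp: walk_regions_Suc last_crossing_regions crossing_regions_ne)

lemma walk_regions_ne: "m > 0 \<Longrightarrow> walk_regions p m \<noteq> []"
  by (cases m) (auto simp: walk_regions_Suc crossing_regions_ne)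

definition convex_quad :: "complex \<Rightarrow> complex \<Rightarrow> complex \<Rightarrow> complex \<Rightarrow> bool" where
  "convex_quad a b c d \<longleftrightarrow> (\<exists>B. convex B \<and> B \<subseteq> Dom \<and> a \<in> B \<and> b \<in> B \<and> c \<in> B \<and> d \<in> B)"

lemma axis_not_opposite_sides: "Re z = 0 \<Longrightarrow> \<not> opposite_sides z w \<and> \<not> opposite_sides w z"
  by (auto simp: opposite_sides_def)

lemma convex_axis_region_of_eq:
  assumes "convex B" "B \<subseteq> Dom" "z \<in> B" "w \<in> B" "Re z = 0" "Re w = 0"
  shows "region_of z = region_of w"
  using convex_axis_floor_eq[OF assms] assms(5,6) by (simp add: region_of_def)

lemma foldl_push_reduce_walk_regions_row:
  fixes p q :: "nat \<Rightarrow> complex"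
  assumes cells: "\<forall>j<M. convex_quad (p j) (p (Suc j)) (q j) (q (Suc j))" and M: "0 < M"
    and ends: "Re (p 0) = 0" "Re (q 0) = 0" "Re (p M) = 0" "Re (q M) = 0"
    and S: "reduced_walk S" "S \<noteq> []" "hd S = region_of (p 0)"
  shows "foldl push_reduce S (walk_regions p M) = foldl push_reduce S (walk_regions q M)"
proof -
  obtain B0 where B0: "convex B0" "B0 \<subseteq> Dom" "p 0 \<in> B0" "q 0 \<in> B0"
    using cells M unfolding convex_quad_def by blast
  have st0: "region_of (q 0) = region_of (p 0)"
    using convex_axis_region_of_eq[OF B0(1,2,4,3)] ends by simp
  have tr0: "crossing_regions (p 0) (q 0) = [hd S]"
    using axis_not_opposite_sides[OF ends(1)] st0 S by (simp add: crossing_regions_def)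
  have D: "foldl push_reduce S (walk_regions p j)
    = foldl push_reduce S
      (crossing_regions (p 0) (q 0) @ walk_regions q j @ crossing_regions (q j) (p j))" if "j \<le> M"
        for j
    using that
  proof (induction j)
    case 0
    have "crossing_regions (q 0) (p 0) = [hd S]" using axis_not_opposite_sides[OF ends(2)] S
      by (simp add: crossing_regions_def)
    then show ?case using tr0 S by (simp add: walk_regions_0 push_reduce_hd)
  next
    case (Suc j)
    then have jM: "j < M" by simp
    obtain B where B: "convex B" "B \<subseteq> Dom" "p j \<in> B" "p (Suc j) \<in> B" "q j \<in> B" "q (Suc j) \<in> B"
      using cells jM unfolding convex_quad_def by blast
    obtain k where k: "\<forall>z\<in>B. Re z = 0 \<longrightarrow> \<lfloor>Im z\<rfloor> = k" using convex_axis_floor_const[OF B(1,2)]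
      by blast
    define T where "T = foldl push_reduce S (crossing_regions (p 0) (q 0) @ walk_regions q j)"
    have T: "T \<noteq> []" "reduced_walk T" "hd T = region_of (q j)"
    proof -
      show "T \<noteq> []" using S by (simp add: T_def foldl_push_reduce_ne)
      show "reduced_walk T" using S by (simp add: T_def reduced_walk_foldl)
      have "last (crossing_regions (p 0) (q 0) @ walk_regions q j) = region_of (q j)"
        by (cases "j = 0") (auto simp: tr0 walk_regions_0 last_walk_regions walk_regions_ne S st0)
      then show "hd T = region_of (q j)"
        using hd_foldl_push_reduce[of "crossing_regions (p 0) (q 0) @ walk_regions q j" S]
          by (simp add: T_def tr0)
    qed
    note t1 = crossing_regions_star[OF B(1,2) B(5) B(3) k] and t2
      = crossing_regions_star[OF B(1,2) B(3) B(4) k]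
      and t3 = crossing_regions_star[OF B(1,2) B(5) B(6) k] and t4
        = crossing_regions_star[OF B(1,2) B(6) B(4) k]
    have "foldl push_reduce T (crossing_regions (q j) (p j) @ crossing_regions (p j) (p (Suc j))) =
          foldl push_reduce T (crossing_regions (q j) (q (Suc j))
            @ crossing_regions (q (Suc j)) (p (Suc j)))"
    proof (rule foldl_push_reduce_star_cong[OF T(1,2)])
      show "hd T \<in> {Lhp, Rhp, Gap k}" using T(3) region_of_in_star[OF k B(5)] by simp
      show "set (crossing_regions (q j) (p j) @ crossing_regions (p j) (p (Suc j)))
        \<subseteq> {Lhp, Rhp, Gap k}" using t1 t2 by auto
      show "set (crossing_regions (q j) (q (Suc j)) @ crossing_regions (q (Suc j)) (p (Suc j)))
        \<subseteq> {Lhp, Rhp, Gap k}" using t3 t4 by auto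
      show "successively adjacent
        (hd T # crossing_regions (q j) (p j) @ crossing_regions (p j) (p (Suc j)))"
        using successively_adjacent_append[OF t1(2) t2(2)] T(3)
          by (simp add: crossing_regions_ne last_crossing_regions)
      show "successively adjacent
        (hd T # crossing_regions (q j) (q (Suc j)) @ crossing_regions (q (Suc j)) (p (Suc j)))"
        using successively_adjacent_append[OF t3(2) t4(2)] T(3)
          by (simp add: crossing_regions_ne last_crossing_regions)
    qed (auto simp: crossing_regions_ne last_crossing_regions)
    then show ?case using Suc(1) jM by (simp add: walk_regions_Suc T_def)
  qed
  have "foldl push_reduce S (walk_regions p M)
    = foldl push_reduce (foldl push_reduce S (walk_regions q M)) (crossing_regions (q M) (p M))"
    using D[of M] tr0 S by (simp add: push_reduce_hd)
  also have "\<dots> = foldl push_reduce S (walk_regions q M)"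
  proof -
    obtain B where B: "convex B" "B \<subseteq> Dom" "p M \<in> B" "q M \<in> B"
      using cells M unfolding convex_quad_def by (metis Suc_pred' lessI)
    have "region_of (p M) = region_of (q M)" using convex_axis_region_of_eq[OF B(1,2,3,4)] ends
      by simp
    moreover have "hd (foldl push_reduce S (walk_regions q M)) = region_of (q M)"
      using hd_foldl_push_reduce[OF walk_regions_ne[OF M]] last_walk_regions[OF M] by simp
    ultimately show ?thesis using axis_not_opposite_sides[OF ends(4)] S
      by (simp add: crossing_regions_def push_reduce_hd foldl_push_reduce_ne)
  qed
  finally show ?thesis .
qed

section \<open>Discretising the homotopy\<close>

lemma path_crosses_axis:
  assumes "path g" "0 \<le> a" "a < b" "b \<le> 1" "opposite_sides (g a) (g b)"
  shows "\<exists>c. a < c \<and> c < b \<and> Re (g c) = 0"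
proof -
  have cont: "continuous_on {a..b} (\<lambda>t. Re (g t))"
    using assms(1-4) unfolding path_def
    by (intro continuous_intros) (auto elim: continuous_on_subset)
  have "\<exists>c. a \<le> c \<and> c \<le> b \<and> Re (g c) = 0"
  proof (cases "Re (g a) < 0")
    case True
    then have "Re (g b) > 0" using assms(5) by (auto simp: opposite_sides_def)
    then show ?thesis using IVT'[of "\<lambda>t. Re (g t)" a 0 b] True cont assms(3) by auto
  next
    case False
    then have "Re (g a) > 0" "Re (g b) < 0" using assms(5) by (auto simp: opposite_sides_def)
    then show ?thesis using IVT2'[of "\<lambda>t. Re (g t)" b 0 a] cont assms(3) by auto
  qed
  then obtain c where c: "a \<le> c" "c \<le> b" "Re (g c) = 0" by blast
  have "c \<noteq> a" "c \<noteq> b" using c assms(5) by (auto simp: opposite_sides_def)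
  then show ?thesis using c by force
qed

lemma convex_steps_refinement:
  assumes g: "path g" and x: "\<forall>j\<le>M. x j \<in> {0..1}" "\<forall>j<M. x j < x (Suc j)"
    and cells: "\<forall>j<M. \<exists>B. convex B \<and> B \<subseteq> Dom \<and> g ` {x j..x (Suc j)} \<subseteq> B"
  shows "\<exists>zs. set zs \<subseteq> {0..1} \<and> zs \<noteq> [] \<and> hd zs = x 0 \<and> last zs = x M
    \<and> successively (convex_step g) zs \<and>
    map (region_of \<circ> g) zs = region_of (g (x 0)) # walk_regions (\<lambda>j. g (x j)) M"
  using x cells
proof (induction M)
  case 0
  have "set [x 0] \<subseteq> {0..1}" using 0 by simp
  moreover have "map (region_of \<circ> g) [x 0] = region_of (g (x 0)) # walk_regions (\<lambda>j. g (x j)) 0"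
    by (simp add: walk_regions_0)
  ultimately show ?case by (intro exI[of _ "[x 0]"]) simp
next
  case (Suc M)
  have a: "\<forall>j\<le>M. x j \<in> {0..1}" using Suc(2) by simp
  have b: "\<forall>j<M. x j < x (Suc j)" using Suc(3) by simp
  have c: "\<forall>j<M. \<exists>B. convex B \<and> B \<subseteq> Dom \<and> g ` {x j..x (Suc j)} \<subseteq> B" using Suc(4) by simp
  obtain zs where zs0: "set zs \<subseteq> {0..1} \<and> zs \<noteq> [] \<and> hd zs = x 0 \<and> last zs = x M
    \<and> successively (convex_step g) zs \<and>
    map (region_of \<circ> g) zs = region_of (g (x 0)) # walk_regions (\<lambda>j. g (x j)) M"
    using Suc(1)[OF a b c] by (elim exE)
  then have zs: "set zs \<subseteq> {0..1}" "zs \<noteq> []" "hd zs = x 0" "last zs = x M"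
    "successively (convex_step g) zs"
    "map (region_of \<circ> g) zs = region_of (g (x 0)) # walk_regions (\<lambda>j. g (x j)) M" using zs0
      by simp_all
  obtain B where B: "convex B" "B \<subseteq> Dom" "g ` {x M..x (Suc M)} \<subseteq> B" using Suc(4) by (meson lessI)
  have lt: "x M < x (Suc M)" using Suc(3) by simp
  have in01: "x M \<in> {0..1}" "x (Suc M) \<in> {0..1}" using Suc(2) by simp_all
  have gB: "g (x M) \<in> B" "g (x (Suc M)) \<in> B" using B(3) lt by (auto simp: image_subset_iff)
  show ?case
  proof (cases "opposite_sides (g (x M)) (g (x (Suc M)))")
    case False
    define zs' where "zs' = zs @ [x (Suc M)]"
    have "convex_step g (x M) (x (Suc M))" using False lt B by (auto simp: convex_step_def)
    then have f5: "successively (convex_step g) zs'" using zs(2,4,5)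
      unfolding zs'_def successively_append_iff by simp
    have f6: "map (region_of \<circ> g) zs' = region_of (g (x 0)) # walk_regions (\<lambda>j. g (x j)) (Suc M)"
      using zs(6) False unfolding zs'_def walk_regions_Suc by (simp add: crossing_regions_def)
    have f1: "set zs' \<subseteq> {0..1}" using zs(1) in01 by (simp add: zs'_def)
    have f2: "zs' \<noteq> []" "hd zs' = x 0" "last zs' = x (Suc M)"
      using zs(2,3) by (simp_all add: zs'_def)
    show ?thesis by (intro exI[of _ zs'] conjI) (rule f1 f2(1) f2(2) f2(3) f5 f6)+
  next
    case True
    obtain c where c: "x M < c" "c < x (Suc M)" "Re (g c) = 0"
      using path_crosses_axis[OF g _ lt _ True] in01 by auto
    define zs' where "zs' = zs @ [c, x (Suc M)]"
    have gc: "g c \<in> B" using B(3) c by auto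
    have "g ` {x M..c} \<subseteq> B" "g ` {c..x (Suc M)} \<subseteq> B" using B(3) c by auto
    then have "convex_step g (x M) c" "convex_step g c (x (Suc M))" using c B(1,2)
      unfolding convex_step_def opposite_sides_def by auto
    then have f5: "successively (convex_step g) zs'" using zs(2,4,5)
      unfolding zs'_def successively_append_iff by simp
    have "region_of (g c) = Gap \<lfloor>Im (axis_crossing (g (x M)) (g (x (Suc M))))\<rfloor>"
    proof -
      have "axis_crossing (g (x M)) (g (x (Suc M))) \<in> B"
        using axis_crossing_on_axis(2)[OF True] B(1) gB convex_contains_segment by blast
      then show ?thesis using
        convex_axis_region_of_eq[OF B(1,2) gc _ c(3) axis_crossing_on_axis(1)[OF True]]
          axis_crossing_on_axis(1)[OF True] by (simp add: region_of_def)
    qed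
    then have f6: "map (region_of \<circ> g) zs'
      = region_of (g (x 0)) # walk_regions (\<lambda>j. g (x j)) (Suc M)"
      using zs(6) True unfolding zs'_def walk_regions_Suc by (simp add: crossing_regions_def)
    have "c \<in> {0..1}" using c in01 by auto
    then have f1: "set zs' \<subseteq> {0..1}" using zs(1) in01 by (simp add: zs'_def)
    have f2: "zs' \<noteq> []" "hd zs' = x 0" "last zs' = x (Suc M)"
      using zs(2,3) by (simp_all add: zs'_def)
    show ?thesis by (intro exI[of _ zs'] conjI) (rule f1 f2(1) f2(2) f2(3) f5 f6)+
  qed
qed

lemma slalom_homotopic_homotopy:
  assumes "slalom_homotopic g f"
  shows "\<exists>h. continuous_on ({0..1::real} \<times> {0..1::real}) h \<and> h ` ({0..1} \<times> {0..1}) \<subseteq> Dom \<and>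
    (\<forall>x\<in>{0..1}. h (0, x) = g x) \<and> (\<forall>x\<in>{0..1}. h (1, x) = f x) \<and>
    (\<forall>s\<in>{0..1}. h (s, 0) \<in> iRZ \<and> h (s, 1) \<in> iRZ)"
  using assms unfolding slalom_homotopic_def
  by (subst (asm) homotopic_with)
    (auto simp: subtopology_Times[symmetric] continuous_map_subtopology_eu image_subset_iff_funcset)

lemma closed_iZ: "closed iZ"
proof -
  have "iZ = {z. Re z = 0} \<inter> Im -` \<int>" by (auto simp: iZ_def)
  moreover have "closed {z. Re z = 0}" by (intro closed_Collect_eq continuous_intros)
  moreover have "closed (Im -` (\<int>::real set))"
    by (intro continuous_closed_vimage) (auto intro: continuous_intros)
  ultimately show ?thesis by (metis closed_Int)
qed

lemma same_floor_connected_component_iRZ: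
  assumes "a \<in> iRZ" "b \<in> iRZ" "\<lfloor>Im a\<rfloor> = \<lfloor>Im b\<rfloor>"
  shows "connected_component iRZ a b"
proof -
  let ?G = "{p \<in> Dom. region_of p = Gap \<lfloor>Im a\<rfloor>}"
  have "a \<in> ?G" "b \<in> ?G" using assms by (auto simp: iRZ_def in_Dom_iff region_of_eq_Gap)
  then have "closed_segment a b \<subseteq> ?G" using convex_region by (intro closed_segment_subset)
  moreover have "?G \<subseteq> iRZ" by (auto simp: iRZ_def in_Dom_iff region_of_eq_Gap)
  ultimately show ?thesis unfolding connected_component_def
    by (intro exI[of _ "closed_segment a b"]) auto
qed

lemma crossing_regions_not_opposite: "\<not> opposite_sides z w \<Longrightarrow> crossing_regions z w = [region_of w]"
  by (simp add: crossing_regions_def)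

lemma opposite_sides_region_of: "opposite_sides z w \<longleftrightarrow> (region_of z = Lhp \<and> region_of w = Rhp)
  \<or> (region_of z = Rhp \<and> region_of w = Lhp)"
  by (auto simp: opposite_sides_def region_of_def)

lemma foldl_push_reduce_slalom_walk:
  fixes F :: "nat \<Rightarrow> complex"
  assumes K: "K \<ge> 2"
    and fx: "\<forall>j\<le>n*K. region_of (F j) = (if j mod K = 0 then Gap (A (j div K)) else r (j div K))"
    and rsd: "\<forall>q<n. r q = Lhp \<or> r q = Rhp"
    and alt: "\<forall>q. Suc q < n \<longrightarrow> r q \<noteq> r (Suc q)"
    and Ad: "\<forall>q<n. A q \<noteq> A (Suc q)"
  shows "j \<le> n*K \<Longrightarrow> foldl push_reduce [Gap (A 0)] (walk_regions F j) =
     (if j mod K = 0 then slalom_stack A r (j div K) else r (j div K) # slalom_stack A r (j div K))"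
proof (induction j)
  case 0 then show ?case by (simp add: walk_regions_0)
next
  case (Suc j)
  define q where "q = j div K"
  define m where "m = j mod K"
  have jq: "j = q * K + m" "m < K" using K by (auto simp: q_def m_def)
  have qn: "q < n" using Suc(2) jq
    by (metis add_lessD1 le_eq_less_or_eq less_Suc_eq_le mult_less_cancel2 not_less_eq_eq
      trans_le_add1 less_trans_Suc)
  have IH: "foldl push_reduce [Gap (A 0)] (walk_regions F j)
    = (if m = 0 then slalom_stack A r q else r q # slalom_stack A r q)"
    using Suc by (simp add: q_def m_def)
  have stj: "region_of (F j) = (if m = 0 then Gap (A q) else r q)" using fx Suc(2)
    by (simp add: q_def m_def)
  have stj1: "region_of (F (Suc j)) = (if Suc m = K then Gap (A (Suc q)) else r q)"
    using fx Suc(2) K by (simp add: q_def m_def mod_Suc div_Suc)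
  have nopp: "\<not> opposite_sides (F j) (F (Suc j))" unfolding opposite_sides_region_of
    using stj stj1 by auto
  have trj: "crossing_regions (F j) (F (Suc j)) = [region_of (F (Suc j))]"
    using crossing_regions_not_opposite[OF nopp] .
  have goal: "(if Suc j mod K
    = 0 then slalom_stack A r (Suc j div K) else r (Suc j div K) # slalom_stack A r (Suc j div K)) =
     (if Suc m = K then slalom_stack A r (Suc q) else r q # slalom_stack A r q)"
    by (simp add: q_def m_def mod_Suc div_Suc)
  have "foldl push_reduce [Gap (A 0)] (walk_regions F (Suc j))
    = push_reduce (if m = 0 then slalom_stack A r q else r q # slalom_stack A r q)
      (region_of (F (Suc j)))"
    using IH trj by (simp add: walk_regions_Suc)
  also have "\<dots> = (if Suc m = K then slalom_stack A r (Suc q) else r q # slalom_stack A r q)"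
  proof (cases "m = 0")
    case True
    then have "Suc m \<noteq> K" using K by simp
    then have s1: "region_of (F (Suc j)) = r q" using stj1 by simp
    show ?thesis
    proof (cases q)
      case 0 then show ?thesis using True s1 rsd qn \<open>Suc m \<noteq> K\<close> by auto
    next
      case (Suc q')
      then have "r q' \<noteq> r q" using alt qn by auto
      then show ?thesis using True s1 rsd qn \<open>Suc m \<noteq> K\<close> Suc by auto
    qed
  next
    case False
    show ?thesis
    proof (cases "Suc m = K")
      case True
      then have "region_of (F (Suc j)) = Gap (A (Suc q))" using stj1 by simp
      moreover have "A q \<noteq> A (Suc q)" using Ad qn by auto
      ultimately show ?thesis using True False rsd qn by (cases q) auto
    next
      case False2: False
      then show ?thesis using stj1 False by (cases q) auto
    qed
  qed
  finally show ?case using goal by simp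
qed

lemma increasing_partition_mono:
  assumes "\<forall>i<n. t i < t (Suc i)"
  shows "i \<le> j \<Longrightarrow> j \<le> n \<Longrightarrow> (t i :: real) \<le> t j"
proof (induction j)
  case 0 then show ?case by simp
next
  case (Suc j)
  then show ?case
  proof (cases "i = Suc j")
    case False
    then have "t i \<le> t j" using Suc by simp
    moreover have "t j < t (Suc j)" using assms Suc(3) by simp
    ultimately show ?thesis by simp
  qed simp
qed

definition refine_partition :: "nat \<Rightarrow> (nat \<Rightarrow> real) \<Rightarrow> nat \<Rightarrow> real" where
  "refine_partition K t j
    = t (j div K) + (t (Suc (j div K)) - t (j div K)) * real (j mod K) / real K"

lemma refined_partition:
  fixes t :: "nat \<Rightarrow> real"
  assumes K: "K > 0" and t: "t 0 = 0" "t n = 1" "\<forall>i<n. t i < t (Suc i)"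
  defines "x \<equiv> refine_partition K t"
  shows "\<forall>i\<le>n. t i \<in> {0..1}" "\<forall>j\<le>n*K. x j \<in> {0..1}"
    "\<forall>j<n*K. x j < x (Suc j) \<and> x (Suc j) - x j \<le> 1 / real K" "x 0 = 0" "x (n*K) = 1"
proof -
  show t01: "\<forall>i\<le>n. t i \<in> {0..1}"
    using increasing_partition_mono[OF t(3), of 0] increasing_partition_mono[OF t(3), of _ n] t
      by auto
  show "x 0 = 0" using t by (simp add: x_def refine_partition_def)
  show "x (n*K) = 1" using t K by (simp add: x_def refine_partition_def)
  have diff: "x (Suc j) - x j = (t (Suc (j div K)) - t (j div K)) / real K
    \<and> j div K < n" if "j < n*K" for j
  proof -
    define q where "q = j div K"
    define m where "m = j mod K"
    have jq: "j = q * K + m" "m < K" using K by (auto simp: q_def m_def)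
    have qn: "q < n" using that jq
      by (metis add_lessD1 le_eq_less_or_eq less_Suc_eq_le mult_less_cancel2 not_less_eq_eq
        trans_le_add1 less_trans_Suc)
    show ?thesis
    proof (cases "Suc m = K")
      case True
      then have "x (Suc j) = t (Suc q)" "x j = t q + (t (Suc q) - t q) * real (K - 1) / real K"
        using K by (auto simp: x_def refine_partition_def q_def m_def mod_Suc div_Suc)
      moreover have "real (K - 1) = real K - 1" using K by simp
      ultimately show ?thesis using K qn by (simp add: field_simps q_def)
    next
      case False
      then have "x (Suc j) = t q + (t (Suc q) - t q) * real (Suc m) / real K"
        "x j = t q + (t (Suc q) - t q) * real m / real K"
        using K by (auto simp: x_def refine_partition_def q_def m_def mod_Suc div_Suc)
      then show ?thesis using K qn by (simp add: field_simps q_def)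
    qed
  qed
  show "\<forall>j<n*K. x j < x (Suc j) \<and> x (Suc j) - x j \<le> 1 / real K"
  proof (intro allI impI)
    fix j assume j: "j < n*K"
    define q where "q = j div K"
    have d: "x (Suc j) - x j = (t (Suc q) - t q) / real K" "q < n" using diff[OF j]
      by (auto simp: q_def)
    have "t q < t (Suc q)" "t q \<in> {0..1}" "t (Suc q) \<in> {0..1}" using t(3) t01 d(2) by auto
    then have "(t (Suc q) - t q) / real K > 0" "(t (Suc q) - t q) / real K \<le> 1 / real K"
      using K by (auto simp: divide_simps)
    then show "x j < x (Suc j) \<and> x (Suc j) - x j \<le> 1 / real K"
      using d by auto
  qed
  show "\<forall>j\<le>n*K. x j \<in> {0..1}"
  proof (intro allI impI)
    fix j assume j: "j \<le> n*K"
    show "x j \<in> {0..1}"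
    proof (cases "j = n*K")
      case True then show ?thesis using \<open>x (n*K) = 1\<close> by simp
    next
      case False
      then have j': "j < n*K" using j by simp
      define q where "q = j div K"
      define m where "m = j mod K"
      have qn: "q < n" using diff[OF j'] by (simp add: q_def)
      have m: "0 \<le> real m / real K" "real m / real K \<le> 1" using K by (auto simp: m_def divide_simps)
      have tq: "t q \<le> t (Suc q)" "t q \<in> {0..1}" "t (Suc q) \<in> {0..1}" using t(3) t01 qn
        by (auto simp: less_imp_le)
      have xj: "x j = t q + (t (Suc q) - t q) * (real m / real K)"
        by (simp add: x_def refine_partition_def q_def m_def)
      have "0 \<le> (t (Suc q) - t q) * (real m / real K)" using m tq by simp
      moreover have "(t (Suc q) - t q) * (real m / real K) \<le> t (Suc q) - t q"
        by (rule mult_left_le) (use m tq in auto)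
      then show ?thesis using xj tq by auto
    qed
  qed
qed


lemma walk_regions_cong: "(\<And>j. j \<le> m \<Longrightarrow> p j = q j) \<Longrightarrow> walk_regions p m = walk_regions q m"
  unfolding walk_regions_def by (intro arg_cong[where f = concat] map_cong) auto

lemma open_Dom: "open Dom"
  unfolding Dom_def using closed_iZ by (rule open_Compl)

lemma compact_image_uniform_convex_cover:
  fixes h :: "'a::metric_space \<Rightarrow> 'b::euclidean_space"
  assumes "compact S" "continuous_on S h" "h ` S \<subseteq> U" "open U"
  obtains \<delta> where "\<delta> > 0" "\<And>p. p \<in> S \<Longrightarrow> \<exists>B. convex B \<and> B \<subseteq> U \<and> h ` (S \<inter> cball p \<delta>) \<subseteq> B"
proof -
  have "compact (h ` S)" using assms(2,1) by (rule compact_continuous_image)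
  then obtain d where d: "d > 0" "\<forall>z\<in>h ` S. \<forall>y\<in>- U. d \<le> dist z y"
    using separate_compact_closed[of "h ` S" "- U"] assms(3,4) by auto
  have ball_U: "ball z d \<subseteq> U" if "z \<in> h ` S" for z
    using d(2) that by (force simp: ball_def)
  obtain e where e: "e > 0" "\<forall>p\<in>S. \<forall>p'\<in>S. dist p' p < e \<longrightarrow> dist (h p') (h p) < d"
    using compact_uniformly_continuous[OF assms(2,1)] d(1) unfolding uniformly_continuous_on_def
      by metis
  show ?thesis
  proof (rule that[of "e / 2"])
    show "e / 2 > 0" using e(1) by simp
    fix p assume p: "p \<in> S"
    have "h ` (S \<inter> cball p (e / 2)) \<subseteq> ball (h p) d"
      using e p by (auto simp: dist_commute)
    then show "\<exists>B. convex B \<and> B \<subseteq> U \<and> h ` (S \<inter> cball p (e / 2)) \<subseteq> B"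
      using ball_U p by (intro exI[of _ "ball (h p) d"]) auto
  qed
qed

lemma grid_cells_convex:
  fixes h :: "real \<times> real \<Rightarrow> 'b::euclidean_space"
  assumes h: "continuous_on ({0..1} \<times> {0..1}) h" "h ` ({0..1} \<times> {0..1}) \<subseteq> U" "open U"
    and t: "t 0 = 0" "t n = 1" "\<forall>i<n. t i < t (Suc i)"
  obtains K where "K \<ge> 2"
    "\<And>i j. i < K \<Longrightarrow> j < n * K \<Longrightarrow> \<exists>B. convex B \<and> B \<subseteq> U \<and>
       h ` ({real i / real K..real (Suc i) / real K} \<times>
         {refine_partition K t j..refine_partition K t (Suc j)}) \<subseteq> B"
proof -
  let ?Q = "{0..1::real} \<times> {0..1::real}"
  obtain \<delta> where \<delta>: "\<delta> > 0" "\<And>p. p \<in> ?Q \<Longrightarrow> \<exists>B. convex B \<and> B \<subseteq> U \<and> h ` (?Q \<inter> cball p \<delta>) \<subseteq> B"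
    using compact_image_uniform_convex_cover[OF compact_Times[OF compact_Icc compact_Icc] h]
      by blast
  obtain K :: nat where K: "K \<ge> 2" "2 / real K < \<delta>"
  proof -
    obtain N :: nat where "2 / \<delta> < real N" using reals_Archimedean2 by blast
    then have "2 / real (N + 2) < \<delta>" using \<delta>(1) by (simp add: divide_simps algebra_simps)
    then show ?thesis using that[of "N + 2"] by simp
  qed
  show ?thesis
  proof (rule that[OF K(1)])
    fix i j assume i: "i < K" and j: "j < n * K"
    define x where "x = refine_partition K t"
    have x: "x j \<in> {0..1}" "x (Suc j) \<in> {0..1}" "x j < x (Suc j)" "x (Suc j) - x j \<le> 1 / real K"
      using refined_partition[of K t n] K t i j by (auto simp: x_def)
    have i01: "0 \<le> real i / real K" "real (Suc i) / real K \<le> 1"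
      "real (Suc i) / real K - real i / real K = 1 / real K"
      using i by (auto simp: divide_simps)
    let ?R = "{real i / real K..real (Suc i) / real K} \<times> {x j..x (Suc j)}"
    have R_sub: "?R \<subseteq> ?Q \<inter> cball (real i / real K, x j) \<delta>"
    proof
      fix q assume "q \<in> ?R"
      then obtain s y where q: "q = (s, y)" "real i / real K \<le> s" "s \<le> real (Suc i) / real K"
        "x j \<le> y" "y \<le> x (Suc j)" by auto
      have "dist (real i / real K, x j) q \<le> \<bar>s - real i / real K\<bar> + \<bar>y - x j\<bar>"
        using sqrt_sum_squares_le_sum_abs[of "s - real i / real K" "y - x j"]
        unfolding q dist_Pair_Pair dist_real_def by (simp add: power2_commute)
      also have "\<dots> \<le> 2 / real K" using q i01 x by auto
      finally show "q \<in> ?Q \<inter> cball (real i / real K, x j) \<delta>"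
        using K(2) q i01 x order_trans[OF i01(1) q(2)] by auto
    qed
    have "(real i / real K, x j) \<in> ?Q" using i01 x by auto
    then obtain B where B: "convex B" "B \<subseteq> U" "h ` (?Q \<inter> cball (real i / real K, x j) \<delta>) \<subseteq> B"
      using \<delta>(2) by blast
    then show "\<exists>B. convex B \<and> B \<subseteq> U \<and> h ` ({real i / real K..real (Suc i) / real K} \<times>
        {refine_partition K t j..refine_partition K t (Suc j)}) \<subseteq> B"
      using image_mono[OF R_sub, of h] unfolding x_def by blast
  qed
qed

lemma walk_regions_grid_eq:
  fixes P :: "nat \<Rightarrow> nat \<Rightarrow> complex"
  assumes quads: "\<And>i j. i < K \<Longrightarrow> j < M
    \<Longrightarrow> convex_quad (P i j) (P i (Suc j)) (P (Suc i) j) (P (Suc i) (Suc j))"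
    and M: "0 < M" and ends: "\<And>i. i \<le> K \<Longrightarrow> Re (P i 0) = 0 \<and> Re (P i M) = 0"
  shows "region_of (P K 0) = region_of (P 0 0)"
    and "foldl push_reduce [region_of (P 0 0)] (walk_regions (P K) M) =
         foldl push_reduce [region_of (P 0 0)] (walk_regions (P 0) M)"
proof -
  have col: "region_of (P i 0) = region_of (P 0 0)" if "i \<le> K" for i
    using that
  proof (induction i)
    case (Suc i)
    obtain B where B: "convex B" "B \<subseteq> Dom" "P i 0 \<in> B" "P (Suc i) 0 \<in> B"
      using quads[of i 0] Suc(2) M unfolding convex_quad_def by auto
    show ?case using convex_axis_region_of_eq[OF B] ends[of i] ends[of "Suc i"] Suc by simp
  qed simp
  then show "region_of (P K 0) = region_of (P 0 0)" by blast
  have "foldl push_reduce [region_of (P 0 0)] (walk_regions (P i) M) =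
        foldl push_reduce [region_of (P 0 0)] (walk_regions (P 0) M)" if "i \<le> K" for i
    using that
  proof (induction i)
    case (Suc i)
    have "foldl push_reduce [region_of (P 0 0)] (walk_regions (P i) M) =
          foldl push_reduce [region_of (P 0 0)] (walk_regions (P (Suc i)) M)"
    proof (rule foldl_push_reduce_walk_regions_row)
      show "\<forall>j<M. convex_quad (P i j) (P i (Suc j)) (P (Suc i) j) (P (Suc i) (Suc j))"
        using quads Suc(2) by simp
      show "hd [region_of (P 0 0)] = region_of (P i 0)" using col[of i] Suc(2) by simp
    qed (use M ends[of i] ends[of "Suc i"] Suc(2) in simp_all)
    then show ?case using Suc by simp
  qed simp
  then show "foldl push_reduce [region_of (P 0 0)] (walk_regions (P K) M) =
      foldl push_reduce [region_of (P 0 0)] (walk_regions (P 0) M)" by blast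
qed

lemma slalom_breakpoint_iRZ:
  assumes n: "n \<ge> 1" and es: "\<forall>i<n. elem_slalom_side (rr i) (subpath (t i) (t (Suc i)) f)"
    and i: "i \<le> n"
  shows "f (t i) \<in> iRZ"
proof (cases "i < n")
  case True
  then show ?thesis using es by (auto simp: elem_slalom_side_def pathstart_def subpath_def)
next
  case False
  then have "i = Suc (n - 1)" "n - 1 < n" using i n by auto
  then show ?thesis using es by (auto simp: elem_slalom_side_def pathfinish_def subpath_def)
qed

lemma region_of_slalom_refinement:
  assumes n: "n \<ge> 1" and K: "K > 0"
    and es: "\<forall>i<n. elem_slalom_side (rr i) (subpath (t i) (t (Suc i)) f)" and j: "j \<le> n * K"
  shows "region_of (f (refine_partition K t j)) =
    (if j mod K = 0 then Gap \<lfloor>Im (f (t (j div K)))\<rfloor> else if rr (j div K) then Rhp else Lhp)"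
proof -
  define q where "q = j div K"
  define m where "m = j mod K"
  have jq: "j = q * K + m" "m < K" using K by (auto simp: q_def m_def)
  show ?thesis
  proof (cases "m = 0")
    case True
    have "q \<le> n" using div_le_mono[OF j, of K] K by (simp add: q_def)
    moreover have "refine_partition K t j = t q" using True by (simp add: refine_partition_def q_def m_def)
    ultimately show ?thesis
      using slalom_breakpoint_iRZ[OF n es] True by (simp add: region_of_def iRZ_def q_def m_def)
  next
    case False
    have q: "q < n"
    proof (rule ccontr)
      assume "\<not> q < n"
      then have "q * K \<ge> n * K" by simp
      then show False using j jq(1) False by linarith
    qed
    have mK: "real m / real K \<in> {0<..<1}" using False jq(2) K by (auto simp: divide_simps)
    have "refine_partition K t j = (t (Suc q) - t q) * (real m / real K) + t q"
      by (simp add: refine_partition_def q_def m_def)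
    then have "f (refine_partition K t j) = subpath (t q) (t (Suc q)) f (real m / real K)"
      by (simp add: subpath_def)
    then have "if rr q then Re (f (refine_partition K t j)) > 0 else Re (f (refine_partition K t j)) < 0"
      using es q mK unfolding elem_slalom_side_def by auto
    then show ?thesis using False by (auto simp: region_of_def q_def m_def)
  qed
qed

lemma slalom_walk_regions:
  assumes n: "n \<ge> 1" and K: "K \<ge> 2"
    and es: "\<forall>i<n. elem_slalom_side (rr i) (subpath (t i) (t (Suc i)) f)"
    and alt: "\<forall>i. Suc i < n \<longrightarrow> rr i \<noteq> rr (Suc i)"
  defines "A \<equiv> \<lambda>i. \<lfloor>Im (f (t i))\<rfloor>" and "r \<equiv> \<lambda>i. if rr i then Rhp else Lhp"
  shows "foldl push_reduce [Gap (A 0)] (walk_regions (\<lambda>j. f (refine_partition K t j)) (n * K)) =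
         slalom_stack A r n"
    and "region_of (f (t 0)) = Gap (A 0)"
    and "\<forall>q<n. A q \<noteq> A (Suc q)"
proof -
  show "region_of (f (t 0)) = Gap (A 0)"
    using slalom_breakpoint_iRZ[OF n es, of 0] by (simp add: region_of_def iRZ_def A_def)
  show A_step: "\<forall>q<n. A q \<noteq> A (Suc q)"
  proof (intro allI impI)
    fix q assume q: "q < n"
    have "\<not> connected_component iRZ (f (t q)) (f (t (Suc q)))"
      using es q by (auto simp: elem_slalom_side_def pathstart_def pathfinish_def subpath_def)
    then show "A q \<noteq> A (Suc q)"
      using same_floor_connected_component_iRZ slalom_breakpoint_iRZ[OF n es] q by (auto simp: A_def)
  qed
  have regions: "\<forall>j\<le>n * K. region_of (f (refine_partition K t j))
    = (if j mod K = 0 then Gap (A (j div K)) else r (j div K))"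
    using region_of_slalom_refinement[OF n _ es] K by (simp add: A_def r_def)
  show "foldl push_reduce [Gap (A 0)] (walk_regions (\<lambda>j. f (refine_partition K t j)) (n * K)) =
      slalom_stack A r n"
    using foldl_push_reduce_slalom_walk[OF K regions _ _ A_step, of "n * K"] alt K by (auto simp: r_def)
qed


lemma homotopy_walk_regions_eq:
  fixes h :: "real \<times> real \<Rightarrow> complex"
  assumes hc: "continuous_on ({0..1} \<times> {0..1}) h" and hD: "h ` ({0..1} \<times> {0..1}) \<subseteq> Dom"
    and sides: "\<forall>s\<in>{0..1}. h (s, 0) \<in> iRZ \<and> h (s, 1) \<in> iRZ"
    and n: "n \<ge> 1" and t: "t 0 = 0" "t n = 1" "\<forall>i<n. t i < t (Suc i)"
  obtains K where "K \<ge> 2"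
    "\<forall>j<n * K. \<exists>B. convex B \<and> B \<subseteq> Dom \<and>
       (\<lambda>y. h (0, y)) ` {refine_partition K t j..refine_partition K t (Suc j)} \<subseteq> B"
    "region_of (h (1, 0)) = region_of (h (0, 0))"
    "foldl push_reduce [region_of (h (0, 0))]
      (walk_regions (\<lambda>j. h (1, refine_partition K t j)) (n * K)) =
     foldl push_reduce [region_of (h (0, 0))]
       (walk_regions (\<lambda>j. h (0, refine_partition K t j)) (n * K))"
proof -
  obtain K where K: "K \<ge> 2" and cells: "\<And>i j. i < K \<Longrightarrow> j < n * K \<Longrightarrow> \<exists>B. convex B \<and> B \<subseteq> Dom \<and>
      h ` ({real i / real K..real (Suc i) / real K} \<times>
        {refine_partition K t j..refine_partition K t (Suc j)}) \<subseteq> B"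
    using grid_cells_convex[OF hc hD open_Dom t] by blast
  define x where "x = refine_partition K t"
  define M where "M = n * K"
  have x: "\<forall>j\<le>M. x j \<in> {0..1}" "\<forall>j<M. x j < x (Suc j)" "x 0 = 0" "x M = 1"
    using refined_partition[of K t n] K t by (auto simp: x_def M_def)
  define P where "P i j = h (real i / real K, x j)" for i j
  have quads: "convex_quad (P i j) (P i (Suc j)) (P (Suc i) j) (P (Suc i) (Suc j))" if "i < K"
    "j < M" for i j
  proof -
    have "real i / real K \<le> real (Suc i) / real K" "x j \<le> x (Suc j)"
      using x(2) that by (auto simp: divide_simps less_imp_le)
    then show ?thesis
      using cells[of i j] that unfolding convex_quad_def P_def x_def M_def
        by (auto simp: image_subset_iff)
  qed
  have ends: "Re (P i 0) = 0 \<and> Re (P i M) = 0" if "i \<le> K" for i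
  proof -
    have "real i / real K \<in> {0..1}" using that K by (auto simp: divide_simps)
    then show ?thesis using sides x(3,4) by (auto simp: P_def iRZ_def)
  qed
  have M: "0 < M" using n K by (simp add: M_def)
  have "region_of (P K 0) = region_of (P 0 0)"
    "foldl push_reduce [region_of (P 0 0)] (walk_regions (P K) M) =
     foldl push_reduce [region_of (P 0 0)] (walk_regions (P 0) M)"
    using walk_regions_grid_eq[of K M P, OF quads M ends] by blast+
  moreover have "\<forall>j<M. \<exists>B. convex B \<and> B \<subseteq> Dom \<and> (\<lambda>y. h (0, y)) ` {x j..x (Suc j)} \<subseteq> B"
  proof (intro allI impI)
    fix j assume j: "j < M"
    obtain B where B: "convex B" "B \<subseteq> Dom" "h ` ({0..1 / real K} \<times> {x j..x (Suc j)}) \<subseteq> B"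
      using cells[of 0 j] j K by (auto simp: x_def M_def)
    then have "(\<lambda>y. h (0, y)) ` {x j..x (Suc j)} \<subseteq> B" by (auto simp: image_subset_iff)
    then show "\<exists>B. convex B \<and> B \<subseteq> Dom \<and> (\<lambda>y. h (0, y)) ` {x j..x (Suc j)} \<subseteq> B"
      using B(1,2) by blast
  qed
  moreover have "P 0 = (\<lambda>j. h (0, x j))" "P K = (\<lambda>j. h (1, x j))" using K by (auto simp: P_def)
  ultimately show ?thesis using that[OF K] x(3) unfolding x_def M_def by simp
qed

lemma slalom_homotopic_path:
  assumes "slalom_homotopic g f"
  shows "path g" "path_image g \<subseteq> Dom"
  using homotopic_with_imp_continuous[OF assms[unfolded slalom_homotopic_def]]
    homotopic_with_imp_subset1[OF assms[unfolded slalom_homotopic_def]]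
  unfolding path_def path_image_def by auto

lemma homotopy_slalom_reduced_word:
  assumes "homotopy_slalom g"
  obtains n zs A r where "path g" "path_image g \<subseteq> Dom" "n \<ge> 1"
    "set zs \<subseteq> {0..1}" "zs \<noteq> []" "hd zs = 0" "last zs = 1" "successively (convex_step g) zs"
    "foldl push_reduce [] (map (region_of \<circ> g) zs) = slalom_stack A r n"
    "\<forall>q<n. A q \<noteq> A (Suc q) \<and> (r q = Lhp \<or> r q = Rhp)"
proof -
  obtain f where sf: "slalom f" and hg: "slalom_homotopic g f"
    using assms unfolding homotopy_slalom_def by blast
  from sf obtain n t rr where n: "n \<ge> 1" and t: "t 0 = 0" "t n = 1" "\<forall>i<n. t i < t (Suc i)"
    and es: "\<forall>i<n. elem_slalom_side (rr i) (subpath (t i) (t (Suc i)) f)"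
    and alt: "\<forall>i. Suc i < n \<longrightarrow> rr i \<noteq> rr (Suc i)"
    unfolding slalom_def by blast
  obtain h :: "real \<times> real \<Rightarrow> complex" where hc: "continuous_on ({0..1} \<times> {0..1}) h"
    and hD: "h ` ({0..1} \<times> {0..1}) \<subseteq> Dom"
    and h0: "\<forall>y\<in>{0..1}. h (0, y) = g y" and h1: "\<forall>y\<in>{0..1}. h (1, y) = f y"
    and sides: "\<forall>s\<in>{0..1}. h (s, 0) \<in> iRZ \<and> h (s, 1) \<in> iRZ"
    using slalom_homotopic_homotopy[OF hg] by blast
  note g = slalom_homotopic_path[OF hg]
  obtain K where K: "K \<ge> 2"
    and h_cells: "\<forall>j<n * K. \<exists>B. convex B \<and> B \<subseteq> Dom \<and>
       (\<lambda>y. h (0, y)) ` {refine_partition K t j..refine_partition K t (Suc j)} \<subseteq> B"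
    and start: "region_of (h (1, 0)) = region_of (h (0, 0))"
    and rows: "foldl push_reduce [region_of (h (0, 0))]
      (walk_regions (\<lambda>j. h (1, refine_partition K t j)) (n * K)) =
     foldl push_reduce [region_of (h (0, 0))]
       (walk_regions (\<lambda>j. h (0, refine_partition K t j)) (n * K))"
    using homotopy_walk_regions_eq[OF hc hD sides n t] by blast
  define x where "x = refine_partition K t"
  define M where "M = n * K"
  have x: "\<forall>j\<le>M. x j \<in> {0..1}" "\<forall>j<M. x j < x (Suc j)" "x 0 = 0" "x M = 1"
    using refined_partition[of K t n] K t by (auto simp: x_def M_def)
  have row_g: "walk_regions (\<lambda>j. h (0, x j)) M = walk_regions (\<lambda>j. g (x j)) M"
    by (rule walk_regions_cong) (use h0 x(1) in simp)
  have row_f: "walk_regions (\<lambda>j. h (1, x j)) M = walk_regions (\<lambda>j. f (x j)) M"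
    by (rule walk_regions_cong) (use h1 x(1) in simp)
  have g_cells: "\<forall>j<M. \<exists>B. convex B \<and> B \<subseteq> Dom \<and> g ` {x j..x (Suc j)} \<subseteq> B"
  proof (intro allI impI)
    fix j assume "j < M"
    then have sub: "{x j..x (Suc j)} \<subseteq> {0..1}" using x(1) by auto
    have "g ` {x j..x (Suc j)} = (\<lambda>y. h (0, y)) ` {x j..x (Suc j)}"
    proof (rule image_cong)
      show "g y = h (0, y)" if "y \<in> {x j..x (Suc j)}" for y
        using h0 subsetD[OF sub that] by simp
    qed simp
    then show "\<exists>B. convex B \<and> B \<subseteq> Dom \<and> g ` {x j..x (Suc j)} \<subseteq> B"
      using h_cells \<open>j < M\<close> by (simp add: x_def M_def)
  qed
  obtain zs where zs: "set zs \<subseteq> {0..1}" "zs \<noteq> []" "hd zs = x 0" "last zs = x M"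
    "successively (convex_step g) zs"
      "map (region_of \<circ> g) zs = region_of (g (x 0)) # walk_regions (\<lambda>j. g (x j)) M"
    using convex_steps_refinement[OF g(1) x(1,2) g_cells]
      by (elim exE conjE) (rule that; assumption)
  define A where "A i = \<lfloor>Im (f (t i))\<rfloor>" for i
  define r where "r i = (if rr i then Rhp else Lhp)" for i
  have top: "foldl push_reduce [Gap (A 0)] (walk_regions (\<lambda>j. f (x j)) M) = slalom_stack A r n"
    "region_of (f 0) = Gap (A 0)" "\<forall>q<n. A q \<noteq> A (Suc q)"
    using slalom_walk_regions[OF n K es alt] t(1) unfolding A_def r_def x_def M_def by simp_all
  have h00: "region_of (h (0, 0)) = Gap (A 0)"
    using start top(2) h1 by simp
  have "foldl push_reduce [] (map (region_of \<circ> g) zs) =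
      foldl push_reduce [region_of (h (0, 0))] (walk_regions (\<lambda>j. h (0, x j)) M)"
    using zs(6) x(3) h0 row_g by simp
  also have "\<dots> = slalom_stack A r n"
    using rows[folded x_def M_def] row_f top(1) h00 by simp
  finally show ?thesis
    using that[of n zs A r] g n zs x(3,4) top(3) by (simp add: r_def)
qed

theorem lemma9:
  fixes g :: "real \<Rightarrow> complex"
  assumes "homotopy_slalom g"
  shows "\<exists>n t. n \<ge> 1 \<and> t 0 = 0 \<and> t n = (1::real) \<and>
           (\<forall>i<n. t i < t (Suc i)) \<and>
           (\<forall>i<n. homotopy_elem_slalom (subpath (t i) (t (Suc i)) g))"
proof -
  obtain n zs A r where g: "path g" "path_image g \<subseteq> Dom" and n: "n \<ge> 1"
    and zs: "set zs \<subseteq> {0..1}" "zs \<noteq> []" "hd zs = 0" "last zs = 1" "successively (convex_step g) zs"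
    and word: "foldl push_reduce [] (map (region_of \<circ> g) zs) = slalom_stack A r n"
    and AR: "\<forall>q<n. A q \<noteq> A (Suc q) \<and> (r q = Lhp \<or> r q = Rhp)"
    using homotopy_slalom_reduced_word[OF assms] by blast
  have "Suc (n - 1) = n" using n by simp
  then obtain tt where "tt 0 = 0" "tt n = 1" "\<forall>j<n. tt j < tt (Suc j)"
    "\<forall>j<n. homotopy_elem_slalom (subpath (tt j) (tt (Suc j)) g)"
    using homotopy_elem_slalom_pieces[OF g zs(1,5,2), of A r "n - 1"] word AR zs(3,4) by auto
  then show ?thesis using n by blast
qed

end
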